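(* Assume the standing setting below with $p=2$, and let $\theta=1-\Theta/2$. For every $f\in L^2(\partial\Omega,\nu)$ with $\int_{\partial\Omega}f\,d\nu=0$ there exists $w_f\in B^\theta_{2,2}(\partial\Omega)$ in the domain of $\mathcal A$ with $\mathcal Aw_f=f$, i.e. $\mathcal E_2(w_f,v)=-\int_{\partial\Omega}vf\,d\nu$ for all $v\in B^\theta_{2,2}(\partial\Omega)$.
   Context: Standing setting: $(X,d,\mu)$ complete metric measure space with $\mu$ Radon, $\Omega\subset X$ a connected open set, $\partial\Omega=\overline\Omega\setminus\Omega$, such that: (H0) $\Omega$ is a John domain (in particular bounded); (H1) $\mu|_{\overline\Omega}$ is doubling and $(\overline\Omega,d,\mu)$ supports a $2$-Poincaré inequality; (H2) $\partial\Omega$ carries a Radon measure $\nu$ with $C^{-1}\mu(B(x,r)\cap\Omega)r^{-\Theta}\le\nu(B(x,r))\le C\mu(B(x,r)\cap\Omega)r^{-\Theta}$ for $x\in\partial\Omega$, $0<r<2\operatorname{diam}\partial\Omega$, with $0<\Theta<2$; in particular $0<\nu(\partial\Omega)<\infty$. Besov: $\|u\|_{\theta,2}^2=\int\int\frac{|u(y)-u(x)|^2}{d(x,y)^{2\theta}\nu(B(x,d(x,y)))}d\nu(y)d\nu(x)$ over $\partial\Omega\times\partial\Omega$, $B^\theta_{2,2}(\partial\Omega)=\{u\in L^2:\|u\|_{\theta,2}<\infty\}$; $\mathcal E_2(u,v)=\int_{\partial\Omega}\int_{\partial\Omega}\frac{(u(y)-u(x))(v(y)-v(x))}{d(x,y)^{2\theta}\nu(B(y,d(x,y)))}d\nu(x)d\nu(y)$.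 A function $u\in B^\theta_{2,2}(\partial\Omega)$ is in the domain of $\mathcal A$ with $\mathcal Au=f\in L^2(\partial\Omega)$ if $\mathcal E_2(u,v)=-\int_{\partial\Omega}vf\,d\nu$ for all $v\in B^\theta_{2,2}(\partial\Omega)$. *)

theory Defs
  imports "HOL-Analysis.Analysis"
begin

definition radon_measure :: "'a::metric_space measure \<Rightarrow> bool" where
  "radon_measure M \<longleftrightarrow>
     sets M = sets borel \<and>
     (\<forall>x. \<exists>r>0. emeasure M (ball x r) < \<infinity>) \<and>
     (\<forall>A\<in>sets borel. emeasure M A = (INF U\<in>{U. open U \<and> A \<subseteq> U}. emeasure M U)) \<and>
     (\<forall>U. open U \<longrightarrow> emeasure M U = (SUP K\<in>{K. compact K \<and> K \<subseteq> U}. emeasure M K))"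

definition curve_length :: "(real \<Rightarrow> 'a::metric_space) \<Rightarrow> real \<Rightarrow> real \<Rightarrow> ennreal" where
  "curve_length \<gamma> s t =
     (SUP (n, p) \<in> {(n, p). p 0 = s \<and> p n = t \<and> (\<forall>i<n. p i \<le> p (Suc i))}.
        ennreal (\<Sum>i<n. dist (\<gamma> (p i)) (\<gamma> (p (Suc i)))))"

definition arclength_curve :: "(real \<Rightarrow> 'a::metric_space) \<Rightarrow> real \<Rightarrow> bool" where
  "arclength_curve \<gamma> l \<longleftrightarrow> 0 \<le> l \<and>
     (\<forall>s t. 0 \<le> s \<and> s \<le> t \<and> t \<le> l \<longrightarrow> curve_length \<gamma> s t = ennreal (t - s))"

definition john_domain :: "'a::metric_space set \<Rightarrow> bool" where
  "john_domain \<Omega> \<longleftrightarrow>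
     (\<exists>C\<ge>1. \<exists>x0\<in>\<Omega>. \<forall>x\<in>\<Omega>. \<exists>l \<gamma>. arclength_curve \<gamma> l \<and> \<gamma> 0 = x \<and> \<gamma> l = x0 \<and>
        \<gamma> ` {0..l} \<subseteq> \<Omega> \<and> (\<forall>t\<in>{0..l}. t \<le> C * infdist (\<gamma> t) (- \<Omega>)))"

definition doubling_on :: "'a::metric_space measure \<Rightarrow> 'a set \<Rightarrow> bool" where
  "doubling_on \<mu> Y \<longleftrightarrow>
     (\<exists>C. \<forall>x\<in>Y. \<forall>r>0. 0 < emeasure \<mu> (ball x r \<inter> Y) \<and> emeasure \<mu> (ball x r \<inter> Y) < \<infinity> \<and>
        emeasure \<mu> (ball x (2*r) \<inter> Y) \<le> ennreal C * emeasure \<mu> (ball x r \<inter> Y))"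

definition upper_gradient_on :: "'a::metric_space set \<Rightarrow> ('a \<Rightarrow> real) \<Rightarrow> ('a \<Rightarrow> ennreal) \<Rightarrow> bool" where
  "upper_gradient_on Y u g \<longleftrightarrow> g \<in> borel_measurable borel \<and>
     (\<forall>\<gamma> l. arclength_curve \<gamma> l \<and> \<gamma> ` {0..l} \<subseteq> Y \<longrightarrow>
        ennreal \<bar>u (\<gamma> 0) - u (\<gamma> l)\<bar> \<le> (\<integral>\<^sup>+ t\<in>{0..l}. g (\<gamma> t) \<partial>lborel))"

text \<open>\<open>(Y,d,\<mu>)\<close> supports a 2-Poincare inequality: there are \<open>C>0\<close>, \<open>\<lambda>\<ge>1\<close> with
  \<open>\<fint>\<^sub>B |u-u\<^sub>B| \<le> C r (\<fint>\<^sub>\<lambda>\<^sub>B g\<^sup>2)\<^sup>1\<^sup>/\<^sup>2\<close> for all balls \<open>B = B(x,r)\<inter>Y\<close>, all locally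
  integrable \<open>u\<close> and all upper gradients \<open>g\<close> of \<open>u\<close>; written in squared form.\<close>
definition poincare2_on :: "'a::metric_space measure \<Rightarrow> 'a set \<Rightarrow> bool" where
  "poincare2_on \<mu> Y \<longleftrightarrow>
     (\<exists>C>0. \<exists>L\<ge>1. \<forall>u g. u \<in> borel_measurable \<mu> \<and>
        (\<forall>x\<in>Y. \<forall>r>0. set_integrable \<mu> (ball x r \<inter> Y) u) \<and> upper_gradient_on Y u g \<longrightarrow>
        (\<forall>x\<in>Y. \<forall>r>0.
          let B = ball x r \<inter> Y; B' = ball x (L*r) \<inter> Y;
              uB = (\<integral> y\<in>B. u y \<partial>\<mu>) / measure \<mu> B
          in ((\<integral>\<^sup>+ y\<in>B. ennreal \<bar>u y - uB\<bar> \<partial>\<mu>) / emeasure \<mu> B) ^ 2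
             \<le> ennreal ((C * r)^2) * ((\<integral>\<^sup>+ y\<in>B'. g y ^ 2 \<partial>\<mu>) / emeasure \<mu> B')))"

definition besov_seminorm_sq :: "'a::metric_space measure \<Rightarrow> 'a set \<Rightarrow> real \<Rightarrow> ('a \<Rightarrow> real) \<Rightarrow> ennreal" where
  "besov_seminorm_sq \<nu> S \<theta> u =
     (\<integral>\<^sup>+ x\<in>S. (\<integral>\<^sup>+ y\<in>S. ennreal ((u y - u x)\<^sup>2 /
        (dist x y powr (2*\<theta>) * measure \<nu> (ball x (dist x y)))) \<partial>\<nu>) \<partial>\<nu>)"

definition besov22 :: "'a::metric_space measure \<Rightarrow> 'a set \<Rightarrow> real \<Rightarrow> ('a \<Rightarrow> real) set" where
  "besov22 \<nu> S \<theta> = {u. u \<in> borel_measurable \<nu> \<and> set_integrable \<nu> S (\<lambda>x. (u x)\<^sup>2) \<and>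
                          besov_seminorm_sq \<nu> S \<theta> u < \<infinity>}"

definition E2 :: "'a::metric_space measure \<Rightarrow> 'a set \<Rightarrow> real \<Rightarrow> ('a \<Rightarrow> real) \<Rightarrow> ('a \<Rightarrow> real) \<Rightarrow> real" where
  "E2 \<nu> S \<theta> u v =
     (\<integral> y\<in>S. (\<integral> x\<in>S. (u y - u x) * (v y - v x) /
        (dist x y powr (2*\<theta>) * measure \<nu> (ball y (dist x y))) \<partial>\<nu>) \<partial>\<nu>)"

end

theory Submission
  imports Defs
begin

text \<open>Dirichlet principle. On \<open>V = B\<^sup>\<theta>\<^sub>2\<^sub>,\<^sub>2(\<partial>\<Omega>)\<close> the form \<open>E2\<close> is symmetric, bilinear and
  nonnegative, and \<open>v \<mapsto> \<integral> v f\<close> is linear. Since \<open>\<theta> > 0\<close> and \<open>\<partial>\<Omega>\<close> has finite diameter \<open>R\<close>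
  (a John domain is bounded), the kernel of \<open>E2\<close> is at least \<open>1 / (R\<^sup>2\<^sup>\<theta> \<nu>(\<partial>\<Omega>))\<close>, which gives
  the Poincare inequality \<open>\<integral> |u - u\<^sub>\<partial>\<^sub>\<Omega>|\<^sup>2 \<le> R\<^sup>2\<^sup>\<theta> E2(u,u)\<close>. As \<open>f\<close> has mean zero, this bounds
  \<open>(\<integral> v f)\<^sup>2\<close> by a multiple of \<open>E2(v,v)\<close>; together with Fatou's lemma it also shows that \<open>V\<close> is
  complete modulo constants. Hence the energy \<open>E2(u,u)/2 + \<integral> u f\<close> is bounded below, minimising
  sequences are Cauchy by the parallelogram law, a limit minimises the energy, and its first
  variation is \<open>E2(w,v) + \<integral> v f = 0\<close>.\<close>

lemma quadratic_nonneg_imp_discriminant: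
  fixes A B C :: real
  assumes nonneg: "\<And>t. 0 \<le> A + 2*t*C + t^2*B" and "A \<ge> 0" "B \<ge> 0"
  shows "C^2 \<le> A * B"
proof (cases "B = 0")
  case True
  have "C = 0"
  proof (rule ccontr)
    assume "C \<noteq> 0"
    have "0 \<le> A + 2 * (- (A+1) / (2*C)) * C" using nonneg[of "- (A+1) / (2*C)"] True by simp
    also have "\<dots> = -1" using \<open>C \<noteq> 0\<close> by (simp add: field_simps)
    finally show False by simp
  qed
  then show ?thesis using True by simp
next
  case False
  then have "B > 0" using \<open>B \<ge> 0\<close> by simp
  have "0 \<le> A + 2 * (-C/B) * C + (-C/B)^2 * B" by (rule nonneg)
  also have "\<dots> = A - C^2 / B" using \<open>B > 0\<close> by (simp add: field_simps power2_eq_square)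
  finally show ?thesis using \<open>B > 0\<close> by (simp add: field_simps)
qed

lemma abs_le_sqrt_mult_of_square_le:
  fixes x a b :: real
  assumes "x\<^sup>2 \<le> a * b"
  shows "\<bar>x\<bar> \<le> sqrt a * sqrt b"
  using real_le_rsqrt[of "\<bar>x\<bar>" "a * b"] assms by (simp add: real_sqrt_mult)

definition lin_comb :: "real \<Rightarrow> ('a \<Rightarrow> real) \<Rightarrow> real \<Rightarrow> ('a \<Rightarrow> real) \<Rightarrow> 'a \<Rightarrow> real" where
  "lin_comb a u b v = (\<lambda>z. a * u z + b * v z)"

locale energy_space =
  fixes V :: "('a \<Rightarrow> real) set"
    and Q :: "('a \<Rightarrow> real) \<Rightarrow> ('a \<Rightarrow> real) \<Rightarrow> real"
    and L :: "('a \<Rightarrow> real) \<Rightarrow> real"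
    and K :: real
  assumes zero_mem: "(\<lambda>z. 0) \<in> V"
    and lin_comb_mem: "\<And>u v a b. u \<in> V \<Longrightarrow> v \<in> V \<Longrightarrow> lin_comb a u b v \<in> V"
    and Q_sym: "\<And>u v. u \<in> V \<Longrightarrow> v \<in> V \<Longrightarrow> Q u v = Q v u"
    and Q_lin_comb: "\<And>u v w a b. u \<in> V \<Longrightarrow> v \<in> V \<Longrightarrow> w \<in> V \<Longrightarrow>
           Q (lin_comb a u b v) w = a * Q u w + b * Q v w"
    and Q_nonneg: "\<And>u. u \<in> V \<Longrightarrow> 0 \<le> Q u u"
    and L_lin_comb: "\<And>u v a b. u \<in> V \<Longrightarrow> v \<in> V \<Longrightarrow> L (lin_comb a u b v) = a * L u + b * L v"
    and L_bounded: "\<And>u. u \<in> V \<Longrightarrow> (L u)\<^sup>2 \<le> K * Q u u"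
    and complete: "\<And>u :: nat \<Rightarrow> 'a \<Rightarrow> real. (\<And>n. u n \<in> V) \<Longrightarrow>
           (\<forall>e>0. \<exists>N. \<forall>n\<ge>N. \<forall>m\<ge>N. Q (lin_comb 1 (u n) (-1) (u m)) (lin_comb 1 (u n) (-1) (u m)) < e) \<Longrightarrow>
           \<exists>w\<in>V. \<exists>r. strict_mono r \<and>
             (\<lambda>j. Q (lin_comb 1 (u (r j)) (-1) w) (lin_comb 1 (u (r j)) (-1) w)) \<longlonglongrightarrow> 0"
begin

lemma Q_lin_comb_right:
  "u \<in> V \<Longrightarrow> v \<in> V \<Longrightarrow> w \<in> V \<Longrightarrow> Q w (lin_comb a u b v) = a * Q w u + b * Q w v"
  using Q_lin_comb Q_sym lin_comb_mem by metis

lemma Q_lin_comb_square: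
  assumes "u \<in> V" "v \<in> V"
  shows "Q (lin_comb a u b v) (lin_comb a u b v) = a^2 * Q u u + 2*a*b * Q u v + b^2 * Q v v"
proof -
  have "Q (lin_comb a u b v) (lin_comb a u b v) = a * Q u (lin_comb a u b v) + b * Q v (lin_comb a u b v)"
    using assms lin_comb_mem Q_lin_comb by blast
  also have "\<dots> = a * (a * Q u u + b * Q u v) + b * (a * Q v u + b * Q v v)"
    using assms Q_lin_comb_right by simp
  finally show ?thesis using Q_sym[OF assms] by (simp add: power2_eq_square algebra_simps)
qed

lemma Q_cauchy_schwarz:
  assumes "u \<in> V" "v \<in> V"
  shows "\<bar>Q u v\<bar> \<le> sqrt (Q u u) * sqrt (Q v v)"
proof -
  have "(Q u v)^2 \<le> Q u u * Q v v"
  proof (rule quadratic_nonneg_imp_discriminant)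
    fix t
    show "0 \<le> Q u u + 2 * t * Q u v + t^2 * Q v v"
      using Q_nonneg[OF lin_comb_mem[OF assms, of 1 t]] Q_lin_comb_square[OF assms, of 1 t] by simp
  qed (use Q_nonneg assms in auto)
  then show ?thesis by (rule abs_le_sqrt_mult_of_square_le)
qed

lemma L_bounded_max: "u \<in> V \<Longrightarrow> (L u)\<^sup>2 \<le> max K 0 * Q u u"
  using L_bounded mult_right_mono[OF max.cobounded1 Q_nonneg] order_trans by blast

lemma Q_L_tendsto:
  assumes u: "\<And>j. u j \<in> V" and w: "w \<in> V"
    and lim: "(\<lambda>j. Q (lin_comb 1 (u j) (-1) w) (lin_comb 1 (u j) (-1) w)) \<longlonglongrightarrow> 0"
  shows "(\<lambda>j. Q (u j) (u j)) \<longlonglongrightarrow> Q w w" "(\<lambda>j. L (u j)) \<longlonglongrightarrow> L w"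
proof -
  define e where "e j = lin_comb 1 (u j) (-1) w" for j
  have e: "e j \<in> V" for j using lin_comb_mem u w by (simp add: e_def)
  have u_eq: "u j = lin_comb 1 w 1 (e j)" for j by (simp add: e_def lin_comb_def fun_eq_iff)
  have sqrt_Qe: "(\<lambda>j. c * sqrt (Q (e j) (e j))) \<longlonglongrightarrow> 0" for c
    using tendsto_mult_left[OF tendsto_real_sqrt[OF lim], of c] by (simp add: e_def)
  have "(\<lambda>j. Q w (e j)) \<longlonglongrightarrow> 0"
    by (rule Lim_null_comparison[OF always_eventually sqrt_Qe[of "sqrt (Q w w)"]]) (simp add: Q_cauchy_schwarz[OF w e])
  then have "(\<lambda>j. Q w w + 2 * Q w (e j) + Q (e j) (e j)) \<longlonglongrightarrow> Q w w + 2 * 0 + 0"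
    using lim by (intro tendsto_intros) (simp_all add: e_def)
  then show "(\<lambda>j. Q (u j) (u j)) \<longlonglongrightarrow> Q w w"
    unfolding u_eq Q_lin_comb_square[OF w e] by simp
  have "(\<lambda>j. L (e j)) \<longlonglongrightarrow> 0"
  proof (rule Lim_null_comparison[OF always_eventually sqrt_Qe[of "sqrt (max K 0)"]], intro allI)
    fix j
    show "norm (L (e j)) \<le> sqrt (max K 0) * sqrt (Q (e j) (e j))"
      using L_bounded_max[OF e] by (simp add: abs_le_sqrt_mult_of_square_le)
  qed
  then have "(\<lambda>j. L w + L (e j)) \<longlonglongrightarrow> L w + 0" by (intro tendsto_intros)
  then show "(\<lambda>j. L (u j)) \<longlonglongrightarrow> L w"
    unfolding u_eq L_lin_comb[OF w e] by simp
qed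

definition energy :: "('a \<Rightarrow> real) \<Rightarrow> real" where
  "energy u = Q u u / 2 + L u"

lemma energy_bounded_below:
  assumes "u \<in> V"
  shows "- max K 0 / 2 \<le> energy u"
proof -
  define k where "k = max K 0"
  have "\<bar>L u\<bar> \<le> sqrt k * sqrt (Q u u)"
    using L_bounded_max[OF assms] unfolding k_def by (rule abs_le_sqrt_mult_of_square_le)
  moreover have "2 * (sqrt k * sqrt (Q u u)) \<le> k + Q u u"
    using sum_squares_bound[of "sqrt k" "sqrt (Q u u)"] Q_nonneg[OF assms] by (simp add: k_def)
  ultimately show ?thesis unfolding energy_def k_def by linarith
qed

lemma energy_parallelogram:
  assumes m: "\<And>v. v \<in> V \<Longrightarrow> m \<le> energy v" and "a \<in> V" "b \<in> V"
  shows "Q (lin_comb 1 a (-1) b) (lin_comb 1 a (-1) b) \<le> 4 * (energy a + energy b - 2 * m)"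
proof -
  have "m \<le> energy (lin_comb (1/2) a (1/2) b)" using m lin_comb_mem assms by blast
  also have "\<dots> = (Q a a + 2 * Q a b + Q b b) / 8 + (L a + L b) / 2"
    unfolding energy_def Q_lin_comb_square[OF assms(2,3)] L_lin_comb[OF assms(2,3)]
    by (simp add: power2_eq_square field_simps)
  finally have "8 * m \<le> Q a a + 2 * Q a b + Q b b + 4 * (L a + L b)" by (simp add: field_simps)
  moreover have "Q (lin_comb 1 a (-1) b) (lin_comb 1 a (-1) b) = Q a a - 2 * Q a b + Q b b"
    using Q_lin_comb_square[OF assms(2,3), of 1 "-1"] by simp
  ultimately show ?thesis unfolding energy_def by simp
qed

lemma minimizing_sequence_cauchy:
  assumes m: "\<And>v. v \<in> V \<Longrightarrow> m \<le> energy v" and u: "\<And>n. u n \<in> V"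
    and u_min: "\<And>n. energy (u n) < m + 1 / (real n + 1)"
  shows "\<forall>e>0. \<exists>N. \<forall>n\<ge>N. \<forall>k\<ge>N. Q (lin_comb 1 (u n) (-1) (u k)) (lin_comb 1 (u n) (-1) (u k)) < e"
proof (intro allI impI)
  fix e :: real assume "e > 0"
  obtain N :: nat where "8 / e < real N" using reals_Archimedean2 by blast
  then have N: "8 / (real N + 1) < e" using \<open>e > 0\<close> by (simp add: field_simps)
  have min_N: "energy (u n) < m + 1 / (real N + 1)" if "n \<ge> N" for n
  proof -
    have "1 / (real n + 1) \<le> 1 / (real N + 1)" using that by (simp add: frac_le)
    then show ?thesis using u_min[of n] by linarith
  qed
  show "\<exists>N. \<forall>n\<ge>N. \<forall>k\<ge>N. Q (lin_comb 1 (u n) (-1) (u k)) (lin_comb 1 (u n) (-1) (u k)) < e"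
  proof (intro exI[of _ N] allI impI)
    fix n k assume "n \<ge> N" "k \<ge> N"
    have "Q (lin_comb 1 (u n) (-1) (u k)) (lin_comb 1 (u n) (-1) (u k)) \<le> 4 * (energy (u n) + energy (u k) - 2 * m)"
      using energy_parallelogram[OF m u u] by blast
    also have "\<dots> < 8 / (real N + 1)"
      using min_N[OF \<open>n \<ge> N\<close>] min_N[OF \<open>k \<ge> N\<close>] by simp
    finally show "Q (lin_comb 1 (u n) (-1) (u k)) (lin_comb 1 (u n) (-1) (u k)) < e" using N by simp
  qed
qed

lemma exists_energy_minimizer: "\<exists>w\<in>V. \<forall>v\<in>V. energy w \<le> energy v"
proof -
  define m where "m = Inf (energy ` V)"
  have bdd: "bdd_below (energy ` V)" using energy_bounded_below by (intro bdd_belowI) auto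
  have m_le: "m \<le> energy v" if "v \<in> V" for v unfolding m_def using bdd that by (simp add: cInf_lower)
  have "\<exists>u\<in>V. energy u < m + 1 / (real n + 1)" for n
    using cInf_lessD[of "energy ` V" "m + 1 / (real n + 1)"] zero_mem by (auto simp: m_def)
  then obtain u where u: "\<And>n. u n \<in> V" and u_min: "\<And>n. energy (u n) < m + 1 / (real n + 1)"
    by metis
  have "\<forall>e>0. \<exists>N. \<forall>n\<ge>N. \<forall>k\<ge>N. Q (lin_comb 1 (u n) (-1) (u k)) (lin_comb 1 (u n) (-1) (u k)) < e"
    using m_le u u_min by (rule minimizing_sequence_cauchy)
  then obtain w r where w: "w \<in> V" and r: "strict_mono r"
    and lim: "(\<lambda>j. Q (lin_comb 1 (u (r j)) (-1) w) (lin_comb 1 (u (r j)) (-1) w)) \<longlonglongrightarrow> 0"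
    using complete[of u, OF u] by blast
  have "(\<lambda>j. energy (u (r j))) \<longlonglongrightarrow> energy w"
    unfolding energy_def using Q_L_tendsto[OF u w lim] by (intro tendsto_intros) simp_all
  moreover have "(\<lambda>j. energy (u (r j))) \<longlonglongrightarrow> m"
  proof (rule tendsto_sandwich[of "\<lambda>j. m" _ _ "\<lambda>j. m + 1 / (real j + 1)"])
    have "energy (u (r j)) \<le> m + 1 / (real j + 1)" for j
    proof -
      have "1 / (real (r j) + 1) \<le> 1 / (real j + 1)"
        using seq_suble[OF r, of j] by (simp add: frac_le)
      then show ?thesis using u_min[of "r j"] by linarith
    qed
    then show "\<forall>\<^sub>F j in sequentially. energy (u (r j)) \<le> m + 1 / (real j + 1)"
      by simp
    show "(\<lambda>j. m + 1 / (real j + 1)) \<longlonglongrightarrow> m"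
      using LIMSEQ_inverse_real_of_nat_add[of m] by (simp add: inverse_eq_divide add.commute)
  qed (use m_le u in auto)
  ultimately have "energy w = m" by (rule LIMSEQ_unique)
  then show ?thesis using w m_le by blast
qed

lemma energy_minimizer_solves:
  assumes w: "w \<in> V" and minimal: "\<And>v. v \<in> V \<Longrightarrow> energy w \<le> energy v" and v: "v \<in> V"
  shows "Q w v = - L v"
proof -
  have "((Q w v + L v) / 2)\<^sup>2 \<le> 0 * (Q v v / 2)"
  proof (rule quadratic_nonneg_imp_discriminant)
    fix t
    have "energy w \<le> energy (lin_comb 1 w t v)" using minimal lin_comb_mem[OF w v] by blast
    also have "\<dots> = energy w + t * (Q w v + L v) + t^2 * (Q v v / 2)"
      unfolding energy_def Q_lin_comb_square[OF w v] L_lin_comb[OF w v] by (simp add: algebra_simps)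
    finally show "0 \<le> 0 + 2 * t * ((Q w v + L v) / 2) + t^2 * (Q v v / 2)" by simp
  qed (use Q_nonneg[OF v] in simp_all)
  then show ?thesis by simp
qed

theorem exists_solution: "\<exists>w\<in>V. \<forall>v\<in>V. Q w v = - L v"
  using exists_energy_minimizer energy_minimizer_solves by blast

end

lemma cauchy_fast_subsequence:
  fixes d :: "nat \<Rightarrow> nat \<Rightarrow> real" and \<delta> :: "nat \<Rightarrow> real"
  assumes cauchy: "\<forall>e>0. \<exists>N. \<forall>n\<ge>N. \<forall>m\<ge>N. d n m < e" and pos: "\<And>k. 0 < \<delta> k"
  shows "\<exists>r. strict_mono r \<and> (\<forall>j k. k \<le> j \<longrightarrow> d (r j) (r k) < \<delta> k)"
proof -
  have "\<forall>k. \<exists>N. \<forall>n\<ge>N. \<forall>m\<ge>N. d n m < \<delta> k" using cauchy pos by blast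
  then obtain N where N: "\<And>k n m. n \<ge> N k \<Longrightarrow> m \<ge> N k \<Longrightarrow> d n m < \<delta> k" by metis
  define r where "r j = (\<Sum>i\<le>j. N i) + j" for j
  have "N k \<le> r j" if "k \<le> j" for k j
    using member_le_sum[of k "{..j}" N] that by (simp add: r_def)
  then have "d (r j) (r k) < \<delta> k" if "k \<le> j" for j k
    using N that by blast
  moreover have "strict_mono r" unfolding strict_mono_Suc_iff r_def by simp
  ultimately show ?thesis by blast
qed

lemma convergent_of_summable_weighted_increments:
  fixes b :: "nat \<Rightarrow> real"
  assumes summable: "summable (\<lambda>j. 2^j * (b (Suc j) - b j)\<^sup>2)"
  shows "convergent b"
proof -
  define C where "C = (\<Sum>j. 2^j * (b (Suc j) - b j)\<^sup>2)"
  have bound: "2^j * (b (Suc j) - b j)\<^sup>2 \<le> C" for j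
    unfolding C_def using sum_le_suminf[OF summable, of "{j}"] by simp
  have incr: "\<bar>b (Suc j) - b j\<bar> \<le> sqrt C * sqrt (1/2) ^ j" for j
  proof -
    have "(b (Suc j) - b j)\<^sup>2 \<le> C / 2^j" using bound[of j] by (simp add: pos_le_divide_eq mult.commute)
    then have "\<bar>b (Suc j) - b j\<bar>\<^sup>2 \<le> C * (1/2)^j" by (simp add: power_one_over)
    then have "\<bar>b (Suc j) - b j\<bar> \<le> sqrt (C * (1/2)^j)" by (rule real_le_rsqrt)
    also have "\<dots> = sqrt C * sqrt (1/2) ^ j" by (simp only: real_sqrt_mult real_sqrt_power)
    finally show ?thesis .
  qed
  have "summable (\<lambda>j. sqrt C * sqrt (1/2) ^ j)"
    by (intro summable_mult summable_geometric) simp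
  then have "summable (\<lambda>j. b (Suc j) - b j)"
    by (rule summable_comparison_test[rotated]) (use incr in auto)
  then have "(\<lambda>j. b 0 + (\<Sum>i<j. b (Suc i) - b i)) \<longlonglongrightarrow> b 0 + (\<Sum>i. b (Suc i) - b i)"
    by (intro tendsto_add tendsto_const summable_LIMSEQ)
  then have "b \<longlonglongrightarrow> b 0 + (\<Sum>i. b (Suc i) - b i)" by (simp add: sum_lessThan_telescope)
  then show ?thesis by (rule convergentI)
qed

lemma set_integrable_mult_of_squares:
  fixes u v :: "'a \<Rightarrow> real"
  assumes [measurable]: "A \<in> sets M" "u \<in> borel_measurable M" "v \<in> borel_measurable M"
    and u2: "set_integrable M A (\<lambda>x. (u x)\<^sup>2)" and v2: "set_integrable M A (\<lambda>x. (v x)\<^sup>2)"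
  shows "set_integrable M A (\<lambda>x. u x * v x)"
proof (rule set_integrable_bound)
  show "set_integrable M A (\<lambda>x. (u x)\<^sup>2 + (v x)\<^sup>2)" using u2 v2 by (rule set_integral_add)
  show "set_borel_measurable M A (\<lambda>x. u x * v x)" unfolding set_borel_measurable_def by measurable
  have "\<bar>u x * v x\<bar> \<le> (u x)\<^sup>2 + (v x)\<^sup>2" for x
  proof -
    have "2 * (\<bar>u x\<bar> * \<bar>v x\<bar>) \<le> (u x)\<^sup>2 + (v x)\<^sup>2"
      using sum_squares_bound[of "\<bar>u x\<bar>" "\<bar>v x\<bar>"] by (simp add: mult.assoc)
    moreover have "0 \<le> \<bar>u x\<bar> * \<bar>v x\<bar>" by simp
    ultimately show ?thesis unfolding abs_mult by linarith
  qed
  then show "AE x in M. x \<in> A \<longrightarrow> norm (u x * v x) \<le> norm ((u x)\<^sup>2 + (v x)\<^sup>2)" by simp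
qed

lemma set_integral_cauchy_schwarz:
  fixes u v :: "'a \<Rightarrow> real"
  assumes [measurable]: "A \<in> sets M" "u \<in> borel_measurable M" "v \<in> borel_measurable M"
    and u2: "set_integrable M A (\<lambda>x. (u x)\<^sup>2)" and v2: "set_integrable M A (\<lambda>x. (v x)\<^sup>2)"
  shows "(set_lebesgue_integral M A (\<lambda>x. u x * v x))\<^sup>2 \<le>
         set_lebesgue_integral M A (\<lambda>x. (u x)\<^sup>2) * set_lebesgue_integral M A (\<lambda>x. (v x)\<^sup>2)"
proof (rule quadratic_nonneg_imp_discriminant)
  have nonneg: "0 \<le> set_lebesgue_integral M A g" if "\<And>x. 0 \<le> g x" for g :: "'a \<Rightarrow> real"
    unfolding set_lebesgue_integral_def using that by (intro integral_nonneg_AE) simp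
  have uv: "set_integrable M A (\<lambda>x. u x * v x)" by (rule set_integrable_mult_of_squares) (fact assms)+
  fix t :: real
  have "0 \<le> set_lebesgue_integral M A (\<lambda>x. (u x + t * v x)\<^sup>2)" by (rule nonneg) simp
  also have "\<dots> = set_lebesgue_integral M A (\<lambda>x. (u x)\<^sup>2 + (2*t) * (u x * v x) + t^2 * (v x)\<^sup>2)"
    by (simp add: power2_eq_square algebra_simps)
  also have "\<dots> = set_lebesgue_integral M A (\<lambda>x. (u x)\<^sup>2) + 2*t * set_lebesgue_integral M A (\<lambda>x. u x * v x) +
                    t^2 * set_lebesgue_integral M A (\<lambda>x. (v x)\<^sup>2)"
    using u2 v2 uv by (simp add: set_integral_add set_integral_mult_right set_integrable_mult_right)
  finally show "0 \<le> set_lebesgue_integral M A (\<lambda>x. (u x)\<^sup>2) + 2*t * set_lebesgue_integral M A (\<lambda>x. u x * v x) +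
                    t^2 * set_lebesgue_integral M A (\<lambda>x. (v x)\<^sup>2)" .
  show "0 \<le> set_lebesgue_integral M A (\<lambda>x. (u x)\<^sup>2)" "0 \<le> set_lebesgue_integral M A (\<lambda>x. (v x)\<^sup>2)"
    by (rule nonneg, simp)+
qed

lemma (in finite_measure) set_integrable_const:
  "A \<in> sets M \<Longrightarrow> set_integrable M A (\<lambda>x. c :: real)"
  unfolding set_integrable_def using integrable_real_mult_indicator[of A M "\<lambda>x. c"] by (simp add: mult.commute)

lemma (in finite_measure) set_integrable_of_square:
  fixes u :: "'a \<Rightarrow> real"
  assumes [measurable]: "A \<in> sets M" "u \<in> borel_measurable M" and u2: "set_integrable M A (\<lambda>x. (u x)\<^sup>2)"
  shows "set_integrable M A u"
  unfolding set_integrable_def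
proof (rule square_integrable_imp_integrable)
  have "(\<lambda>x. (indicator A x *\<^sub>R u x)\<^sup>2) = (\<lambda>x. indicator A x *\<^sub>R (u x)\<^sup>2)"
    by (auto simp: fun_eq_iff split: split_indicator)
  then show "integrable M (\<lambda>x. (indicator A x *\<^sub>R u x)\<^sup>2)" using u2 by (simp add: set_integrable_def)
qed measurable

locale besov_boundary =
  fixes \<nu> :: "'a::metric_space measure" and S :: "'a set" and \<theta> :: real and D :: "'a set" and R :: real
  assumes sets_nu[measurable_cong]: "sets \<nu> = sets borel"
    and S_borel[measurable]: "S \<in> sets borel"
    and nu_compl_S: "emeasure \<nu> (- S) = 0"
    and nu_S_pos: "0 < emeasure \<nu> S" and nu_S_finite: "emeasure \<nu> S < \<infinity>"
    and countable_D: "countable D" and nu_compl_closure_D: "emeasure \<nu> (- closure D) = 0"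
    and R_pos: "R > 0" and dist_le_R: "\<And>x y. x \<in> S \<Longrightarrow> y \<in> S \<Longrightarrow> dist x y \<le> R"
    and theta_pos: "\<theta> > 0"
begin

lemma space_nu[simp]: "space \<nu> = UNIV"
  using sets_eq_imp_space_eq[OF sets_nu] by simp

lemma sets_nu_iff[simp]: "A \<in> sets \<nu> \<longleftrightarrow> A \<in> sets borel"
  by (simp add: sets_nu)

lemma emeasure_UNIV_eq_S: "emeasure \<nu> UNIV = emeasure \<nu> S"
proof -
  have "emeasure \<nu> UNIV = emeasure \<nu> S + emeasure \<nu> (- S)"
    by (subst plus_emeasure) (auto simp: Compl_eq_Diff_UNIV)
  then show ?thesis using nu_compl_S by simp
qed

sublocale finite_measure \<nu>
  by standard (use emeasure_UNIV_eq_S nu_S_finite in \<open>auto simp: less_top\<close>)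

sublocale pair_sigma_finite \<nu> \<nu> ..

lemma sigma_finite_nu: "sigma_finite_measure \<nu>" by unfold_locales

lemma AE_in_S: "AE x in \<nu>. x \<in> S"
  by (rule AE_I'[of "- S"]) (auto intro!: null_setsI nu_compl_S)

lemma closure_D_borel[measurable]: "closure D \<in> sets borel" by simp

lemma AE_in_closure_D: "AE x in \<nu>. x \<in> closure D"
  by (rule AE_I'[of "- closure D"]) (auto intro!: null_setsI nu_compl_closure_D)

lemma measurable_dist_left[measurable]: "(\<lambda>x. dist x q) \<in> borel_measurable borel"
  by (intro borel_measurable_continuous_onI continuous_intros)

lemma measurable_dist_right[measurable]: "(\<lambda>x. dist q x) \<in> borel_measurable borel"
  by (intro borel_measurable_continuous_onI continuous_intros)

text \<open>In a non-separable space the Borel sets of the product are not generated by rectangles, so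
  continuity of \<open>dist\<close> does not make the kernel measurable for \<open>\<nu> \<Otimes>\<^sub>M \<nu>\<close>.
  Since \<open>\<nu>\<close> lives on the closure of the countable set \<open>D\<close>, distances and ball measures are
  computed through \<open>D\<close> instead.\<close>

definition dense_dist :: "'a \<times> 'a \<Rightarrow> ennreal" where
  "dense_dist p = (INF q\<in>D. ennreal (dist (fst p) q + dist q (snd p)))"

lemma dense_dist_measurable[measurable]: "dense_dist \<in> borel_measurable (\<nu> \<Otimes>\<^sub>M \<nu>)"
  unfolding dense_dist_def by (rule borel_measurable_INF[OF countable_D]) measurable

lemma dense_dist_eq: assumes x: "x \<in> closure D" shows "dense_dist (y, x) = ennreal (dist y x)"
proof (rule antisym)
  show "dense_dist (y, x) \<le> ennreal (dist y x)"
  proof (rule ennreal_le_epsilon)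
    fix e :: real assume e: "0 < e"
    obtain q where q: "q \<in> D" "dist q x < e/2"
      using x e closure_approachable[of x D] by (metis half_gt_zero)
    have "dense_dist (y, x) \<le> ennreal (dist y q + dist q x)"
      unfolding dense_dist_def using q by (intro INF_lower2[OF q(1)]) auto
    also have "\<dots> \<le> ennreal (dist y x + e)"
    proof (rule ennreal_leI)
      have "dist y q \<le> dist y x + dist x q" by (rule dist_triangle)
      then show "dist y q + dist q x \<le> dist y x + e" using q(2) by (simp add: dist_commute)
    qed
    also have "\<dots> = ennreal (dist y x) + ennreal e" using e by (simp add: ennreal_plus)
    finally show "dense_dist (y, x) \<le> ennreal (dist y x) + ennreal e" .
  qed
  show "ennreal (dist y x) \<le> dense_dist (y, x)"
    unfolding dense_dist_def by (intro INF_greatest ennreal_leI) (simp add: dist_triangle)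
qed

definition dense_ball_measure :: "'a \<times> 'a \<Rightarrow> ennreal" where
  "dense_ball_measure p = (\<integral>\<^sup>+ z. indicator (closure D) z * indicator (closure D) (snd p) *
             (if dense_dist (fst p, z) < dense_dist (fst p, snd p) then 1 else 0) \<partial>\<nu>)"

lemma dense_ball_measure_measurable[measurable]: "dense_ball_measure \<in> borel_measurable (\<nu> \<Otimes>\<^sub>M \<nu>)"
proof -
  have [measurable]: "(\<lambda>p. dense_dist (fst (fst p), snd p)) \<in> borel_measurable ((\<nu> \<Otimes>\<^sub>M \<nu>) \<Otimes>\<^sub>M \<nu>)"
    by (rule measurable_compose[OF _ dense_dist_measurable]) measurable
  have [measurable]: "(\<lambda>p. dense_dist (fst p)) \<in> borel_measurable ((\<nu> \<Otimes>\<^sub>M \<nu>) \<Otimes>\<^sub>M \<nu>)"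
    by (rule measurable_compose[OF _ dense_dist_measurable]) measurable
  show ?thesis unfolding dense_ball_measure_def
  proof (rule sigma_finite_measure.borel_measurable_nn_integral[OF sigma_finite_nu, where f="\<lambda>p z. indicator (closure D) z * indicator (closure D) (snd p) *
             (if dense_dist (fst p, z) < dense_dist (fst p, snd p) then 1 else 0)"])
    show "(\<lambda>(p, z). indicator (closure D) z * indicator (closure D) (snd p) *
             (if dense_dist (fst p, z) < dense_dist (fst p, snd p) then 1 else 0 :: ennreal)) \<in> borel_measurable ((\<nu> \<Otimes>\<^sub>M \<nu>) \<Otimes>\<^sub>M \<nu>)"
      unfolding case_prod_beta by measurable
  qed
qed

lemma dense_ball_measure_eq: assumes x: "x \<in> closure D" shows "dense_ball_measure (y, x) = emeasure \<nu> (ball y (dist x y))"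
proof -
  have "dense_ball_measure (y, x) = (\<integral>\<^sup>+ z. indicator (ball y (dist x y)) z \<partial>\<nu>)"
    unfolding dense_ball_measure_def
  proof (rule nn_integral_cong_AE)
    show "AE z in \<nu>. indicator (closure D) z * indicator (closure D) (snd (y, x)) *
             (if dense_dist (fst (y, x), z) < dense_dist (fst (y, x), snd (y, x)) then 1 else 0) =
          (indicator (ball y (dist x y)) z :: ennreal)"
      using AE_in_closure_D
    proof eventually_elim
      case (elim z)
      then show ?case using x by (simp add: dense_dist_eq ennreal_less_iff dist_commute)
    qed
  qed
  also have "\<dots> = emeasure \<nu> (ball y (dist x y))" by simp
  finally show ?thesis .
qed

text \<open>The factor \<open>indicator (closure D) x\<close> changes the kernel of \<open>E2\<close> only on a null set.\<close>

definition besov_kernel :: "'a \<Rightarrow> 'a \<Rightarrow> real" where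
  "besov_kernel y x = indicator S y * indicator S x * indicator (closure D) x /
              (dist x y powr (2*\<theta>) * measure \<nu> (ball y (dist x y)))"

lemma besov_kernel_measurable[measurable]: "(\<lambda>p. besov_kernel (fst p) (snd p)) \<in> borel_measurable (\<nu> \<Otimes>\<^sub>M \<nu>)"
proof -
  have "(\<lambda>p. indicator S (fst p) * indicator S (snd p) * indicator (closure D) (snd p) /
              (enn2real (dense_dist p) powr (2*\<theta>) * enn2real (dense_ball_measure p))) \<in> borel_measurable (\<nu> \<Otimes>\<^sub>M \<nu>)"
    by measurable
  moreover have "besov_kernel (fst p) (snd p) = indicator S (fst p) * indicator S (snd p) * indicator (closure D) (snd p) /
              (enn2real (dense_dist p) powr (2*\<theta>) * enn2real (dense_ball_measure p))" for p
  proof (cases "snd p \<in> closure D")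
    case True
    then show ?thesis using dense_dist_eq[OF True, of "fst p"] dense_ball_measure_eq[OF True, of "fst p"]
      by (cases p) (simp add: besov_kernel_def measure_def dist_commute)
  next
    case False
    then show ?thesis by (simp add: besov_kernel_def)
  qed
  ultimately show ?thesis by simp
qed

lemma besov_kernel_nonneg: "besov_kernel y x \<ge> 0"
  unfolding besov_kernel_def by (intro divide_nonneg_nonneg mult_nonneg_nonneg) auto

lemma pair_sigma_finite_nu: "pair_sigma_finite \<nu> \<nu>" by unfold_locales

definition besov_integrand :: "('a \<Rightarrow> real) \<Rightarrow> ('a \<Rightarrow> real) \<Rightarrow> 'a \<times> 'a \<Rightarrow> real" where
  "besov_integrand u v p = (u (fst p) - u (snd p)) * (v (fst p) - v (snd p)) * besov_kernel (fst p) (snd p)"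

lemma besov_integrand_measurable[measurable]:
  assumes [measurable]: "u \<in> borel_measurable borel" "v \<in> borel_measurable borel"
  shows "besov_integrand u v \<in> borel_measurable (\<nu> \<Otimes>\<^sub>M \<nu>)"
  unfolding besov_integrand_def by measurable

lemma besov_integrand_square_nonneg: "besov_integrand u u p \<ge> 0"
  unfolding besov_integrand_def using besov_kernel_nonneg by (simp add: mult_nonneg_nonneg)

lemma measurable_ball_measure[measurable]: "(\<lambda>x. measure \<nu> (ball y (dist x y))) \<in> borel_measurable borel"
proof -
  have "mono (\<lambda>r. measure \<nu> (ball y r))"
    by (intro monoI finite_measure_mono) auto
  then have "(\<lambda>r. measure \<nu> (ball y r)) \<in> borel_measurable borel" by (rule borel_measurable_mono)
  from measurable_compose[OF measurable_dist_left[of y] this] show ?thesis by simp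
qed

lemma besov_seminorm_sq_eq_integral:
  assumes [measurable]: "u \<in> borel_measurable borel"
  shows "besov_seminorm_sq \<nu> S \<theta> u = (\<integral>\<^sup>+ p. ennreal (besov_integrand u u p) \<partial>(\<nu> \<Otimes>\<^sub>M \<nu>))"
proof -
  have "(\<integral>\<^sup>+ p. ennreal (besov_integrand u u p) \<partial>(\<nu> \<Otimes>\<^sub>M \<nu>)) = (\<integral>\<^sup>+ a. \<integral>\<^sup>+ b. ennreal (besov_integrand u u (a, b)) \<partial>\<nu> \<partial>\<nu>)"
    by (rule sigma_finite_measure.nn_integral_fst[OF sigma_finite_nu, symmetric]) measurable
  also have "\<dots> = besov_seminorm_sq \<nu> S \<theta> u"
    unfolding besov_seminorm_sq_def
  proof (intro nn_integral_cong)
    fix a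
    show "(\<integral>\<^sup>+ b. ennreal (besov_integrand u u (a, b)) \<partial>\<nu>) =
      (\<integral>\<^sup>+ y. ennreal ((u y - u a)\<^sup>2 / (dist a y powr (2 * \<theta>) * measure \<nu> (ball a (dist a y)))) * indicator S y \<partial>\<nu>) * indicator S a"
    proof (cases "a \<in> S")
      case False
      then show ?thesis by (simp add: besov_integrand_def besov_kernel_def)
    next
      case True
      have "(\<integral>\<^sup>+ b. ennreal (besov_integrand u u (a, b)) \<partial>\<nu>) =
        (\<integral>\<^sup>+ y. ennreal ((u y - u a)\<^sup>2 / (dist a y powr (2 * \<theta>) * measure \<nu> (ball a (dist a y)))) * indicator S y \<partial>\<nu>)"
      proof (rule nn_integral_cong_AE)
        show "AE b in \<nu>. ennreal (besov_integrand u u (a, b)) =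
          ennreal ((u b - u a)\<^sup>2 / (dist a b powr (2 * \<theta>) * measure \<nu> (ball a (dist a b)))) * indicator S b"
          using AE_in_closure_D
        proof eventually_elim
          case (elim b)
          have sq: "(u a - u b) * (u a - u b) = (u b - u a)\<^sup>2" by (simp add: power2_eq_square algebra_simps)
          show ?case using True elim
            by (cases "b \<in> S") (simp_all add: besov_integrand_def besov_kernel_def dist_commute sq)
        qed
      qed
      then show ?thesis using True by simp
    qed
  qed
  finally show ?thesis ..
qed

lemma E2_eq_integral_of_integrable:
  assumes [measurable]: "u \<in> borel_measurable borel" "v \<in> borel_measurable borel"
    and int: "integrable (\<nu> \<Otimes>\<^sub>M \<nu>) (besov_integrand u v)"
  shows "E2 \<nu> S \<theta> u v = (\<integral> p. besov_integrand u v p \<partial>(\<nu> \<Otimes>\<^sub>M \<nu>))"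
proof -
  have inner: "indicator S y * (\<integral> x. indicator S x * ((u y - u x) * (v y - v x) /
        (dist x y powr (2*\<theta>) * measure \<nu> (ball y (dist x y)))) \<partial>\<nu>) = (\<integral> x. besov_integrand u v (y, x) \<partial>\<nu>)" for y
  proof -
    have m1: "(\<lambda>x. besov_integrand u v (y, x)) \<in> borel_measurable \<nu>"
      by (rule measurable_Pair2[OF besov_integrand_measurable]) (use assms in auto)
    have "(\<integral> x. besov_integrand u v (y, x) \<partial>\<nu>) = (\<integral> x. indicator S y * (indicator S x * ((u y - u x) * (v y - v x) /
        (dist x y powr (2*\<theta>) * measure \<nu> (ball y (dist x y))))) \<partial>\<nu>)"
    proof (rule integral_cong_AE)
      show "(\<lambda>x. indicator S y * (indicator S x * ((u y - u x) * (v y - v x) /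
        (dist x y powr (2*\<theta>) * measure \<nu> (ball y (dist x y)))))) \<in> borel_measurable \<nu>"
        by measurable
      show "AE x in \<nu>. besov_integrand u v (y, x) = indicator S y * (indicator S x * ((u y - u x) * (v y - v x) /
        (dist x y powr (2*\<theta>) * measure \<nu> (ball y (dist x y)))))"
        using AE_in_closure_D by eventually_elim (simp add: besov_integrand_def besov_kernel_def)
    qed (rule m1)
    then show ?thesis by (simp only: integral_mult_right_zero)
  qed
  have "E2 \<nu> S \<theta> u v = (\<integral> y. \<integral> x. besov_integrand u v (y, x) \<partial>\<nu> \<partial>\<nu>)"
    unfolding E2_def set_lebesgue_integral_def using inner by simp
  also have "\<dots> = (\<integral> p. besov_integrand u v p \<partial>(\<nu> \<Otimes>\<^sub>M \<nu>))"
    by (rule pair_sigma_finite.integral_fst'[OF pair_sigma_finite_nu int])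
  finally show ?thesis .
qed

abbreviation "V \<equiv> besov22 \<nu> S \<theta>"

lemma measurable_nu_iff: "(f :: 'a \<Rightarrow> real) \<in> borel_measurable \<nu> \<longleftrightarrow> f \<in> borel_measurable borel"
  by (simp add: measurable_def sets_nu)

lemma besov22_measurable: "u \<in> V \<Longrightarrow> u \<in> borel_measurable borel"
  by (simp add: besov22_def measurable_nu_iff)

lemma besov22_square_integrable: "u \<in> V \<Longrightarrow> set_integrable \<nu> S (\<lambda>x. (u x)\<^sup>2)"
  by (simp add: besov22_def)

lemma besov22_integrand_finite: "u \<in> V \<Longrightarrow> (\<integral>\<^sup>+ p. ennreal (besov_integrand u u p) \<partial>(\<nu> \<Otimes>\<^sub>M \<nu>)) < \<infinity>"
  using besov_seminorm_sq_eq_integral[OF besov22_measurable, of u] unfolding besov22_def by simp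

lemma besov22I: assumes "u \<in> borel_measurable borel" "set_integrable \<nu> S (\<lambda>x. (u x)\<^sup>2)"
    "(\<integral>\<^sup>+ p. ennreal (besov_integrand u u p) \<partial>(\<nu> \<Otimes>\<^sub>M \<nu>)) < \<infinity>"
  shows "u \<in> V"
  using assms besov_seminorm_sq_eq_integral[OF assms(1)] unfolding besov22_def measurable_nu_iff by simp

lemma besov22_integrable: "u \<in> V \<Longrightarrow> set_integrable \<nu> S u"
  by (rule set_integrable_of_square) (simp_all add: besov22_def)

lemma besov22_mult_integrable: "u \<in> V \<Longrightarrow> v \<in> V \<Longrightarrow> set_integrable \<nu> S (\<lambda>x. u x * v x)"
  by (rule set_integrable_mult_of_squares) (simp_all add: besov22_def)

lemma integrable_besov_integrand_square: assumes "u \<in> V" shows "integrable (\<nu> \<Otimes>\<^sub>M \<nu>) (besov_integrand u u)"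
proof (rule integrableI_nonneg)
  show "besov_integrand u u \<in> borel_measurable (\<nu> \<Otimes>\<^sub>M \<nu>)" using besov22_measurable[OF assms] by measurable
  show "AE x in \<nu> \<Otimes>\<^sub>M \<nu>. 0 \<le> besov_integrand u u x" by (simp add: besov_integrand_square_nonneg)
  show "(\<integral>\<^sup>+ x. ennreal (besov_integrand u u x) \<partial>(\<nu> \<Otimes>\<^sub>M \<nu>)) < \<infinity>" by (rule besov22_integrand_finite[OF assms])
qed

lemma besov_integrand_bound: "\<bar>besov_integrand u v p\<bar> \<le> (besov_integrand u u p + besov_integrand v v p) / 2"
proof -
  define a where "a = u (fst p) - u (snd p)"
  define b where "b = v (fst p) - v (snd p)"
  define k where "k = besov_kernel (fst p) (snd p)"
  have k: "k \<ge> 0" using besov_kernel_nonneg by (simp add: k_def)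
  have "0 \<le> (\<bar>a\<bar> - \<bar>b\<bar>)^2" by simp
  then have "\<bar>a * b\<bar> \<le> (a * a + b * b) / 2"
    by (simp add: power2_eq_square abs_mult algebra_simps abs_mult_self)
  then have "\<bar>a * b\<bar> * k \<le> (a * a + b * b) / 2 * k" using k by (rule mult_right_mono)
  then show ?thesis unfolding besov_integrand_def a_def[symmetric] b_def[symmetric] k_def[symmetric]
    using k by (simp add: abs_mult algebra_simps)
qed

lemma integrable_besov_integrand: assumes "u \<in> V" "v \<in> V" shows "integrable (\<nu> \<Otimes>\<^sub>M \<nu>) (besov_integrand u v)"
proof (rule Bochner_Integration.integrable_bound)
  show "integrable (\<nu> \<Otimes>\<^sub>M \<nu>) (\<lambda>p. (besov_integrand u u p + besov_integrand v v p) / 2)"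
    using integrable_besov_integrand_square[OF assms(1)] integrable_besov_integrand_square[OF assms(2)] by simp
  show "besov_integrand u v \<in> borel_measurable (\<nu> \<Otimes>\<^sub>M \<nu>)" using besov22_measurable[OF assms(1)] besov22_measurable[OF assms(2)] by measurable
  show "AE x in \<nu> \<Otimes>\<^sub>M \<nu>. norm (besov_integrand u v x) \<le> norm ((besov_integrand u u x + besov_integrand v v x) / 2)"
  proof (intro AE_I2)
    fix x
    have "norm (besov_integrand u v x) \<le> (besov_integrand u u x + besov_integrand v v x) / 2" using besov_integrand_bound by simp
    also have "\<dots> \<le> norm ((besov_integrand u u x + besov_integrand v v x) / 2)" using besov_integrand_square_nonneg[of u x] besov_integrand_square_nonneg[of v x] by simp
    finally show "norm (besov_integrand u v x) \<le> norm ((besov_integrand u u x + besov_integrand v v x) / 2)" .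
  qed
qed

lemma E2_eq_integral: "u \<in> V \<Longrightarrow> v \<in> V \<Longrightarrow> E2 \<nu> S \<theta> u v = (\<integral> p. besov_integrand u v p \<partial>(\<nu> \<Otimes>\<^sub>M \<nu>))"
  by (rule E2_eq_integral_of_integrable[OF besov22_measurable besov22_measurable integrable_besov_integrand])

lemma besov_integrand_lin_comb: "besov_integrand (lin_comb a u b v) w p = a * besov_integrand u w p + b * besov_integrand v w p"
  unfolding besov_integrand_def lin_comb_def by (simp add: algebra_simps)

lemma besov_integrand_sym: "besov_integrand u v p = besov_integrand v u p"
  unfolding besov_integrand_def by (simp add: algebra_simps)

lemma besov22_lin_comb: assumes "u \<in> V" "v \<in> V" shows "lin_comb a u b v \<in> V"
proof (rule besov22I)
  note [measurable] = besov22_measurable[OF assms(1)] besov22_measurable[OF assms(2)]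
  show "lin_comb a u b v \<in> borel_measurable borel" unfolding lin_comb_def by measurable
  have "set_integrable \<nu> S (\<lambda>x. a^2 * (u x)\<^sup>2 + 2*a*b * (u x * v x) + b^2 * (v x)\<^sup>2)"
    using besov22_square_integrable[OF assms(1)] besov22_square_integrable[OF assms(2)] besov22_mult_integrable[OF assms]
    by (intro set_integral_add set_integrable_mult_right) auto
  then show "set_integrable \<nu> S (\<lambda>x. (lin_comb a u b v x)\<^sup>2)"
    by (simp add: lin_comb_def power2_eq_square algebra_simps)
  have "(\<integral>\<^sup>+ p. ennreal (besov_integrand (lin_comb a u b v) (lin_comb a u b v) p) \<partial>(\<nu> \<Otimes>\<^sub>M \<nu>)) \<le>
        (\<integral>\<^sup>+ p. ennreal (2*a^2) * ennreal (besov_integrand u u p) + ennreal (2*b^2) * ennreal (besov_integrand v v p) \<partial>(\<nu> \<Otimes>\<^sub>M \<nu>))"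
  proof (intro nn_integral_mono)
    fix p
    define x where "x = u (fst p) - u (snd p)"
    define y where "y = v (fst p) - v (snd p)"
    define k where "k = besov_kernel (fst p) (snd p)"
    have k: "k \<ge> 0" using besov_kernel_nonneg by (simp add: k_def)
    have e1: "besov_integrand (lin_comb a u b v) (lin_comb a u b v) p = (a*x + b*y)^2 * k"
      by (simp add: besov_integrand_def lin_comb_def x_def y_def k_def power2_eq_square algebra_simps)
    have e2: "besov_integrand u u p = x^2 * k" "besov_integrand v v p = y^2 * k"
      by (simp_all add: besov_integrand_def x_def y_def k_def power2_eq_square)
    have "0 \<le> (a*x - b*y)^2" by simp
    then have "(a*x + b*y)^2 \<le> 2*a^2*x^2 + 2*b^2*y^2"
      by (simp add: power2_eq_square algebra_simps)
    then have "(a*x + b*y)^2 * k \<le> (2*a^2*x^2 + 2*b^2*y^2) * k" using k by (rule mult_right_mono)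
    then have "ennreal ((a*x + b*y)^2 * k) \<le> ennreal (2*a^2 * (x^2*k) + 2*b^2 * (y^2*k))"
      by (intro ennreal_leI) (simp add: algebra_simps)
    also have "\<dots> = ennreal (2*a^2) * ennreal (x^2*k) + ennreal (2*b^2) * ennreal (y^2*k)"
      using k by (simp add: ennreal_plus ennreal_mult)
    finally show "ennreal (besov_integrand (lin_comb a u b v) (lin_comb a u b v) p) \<le>
        ennreal (2*a^2) * ennreal (besov_integrand u u p) + ennreal (2*b^2) * ennreal (besov_integrand v v p)"
      using e1 e2 by simp
  qed
  also have "\<dots> = ennreal (2*a^2) * (\<integral>\<^sup>+ p. ennreal (besov_integrand u u p) \<partial>(\<nu> \<Otimes>\<^sub>M \<nu>)) +
                  ennreal (2*b^2) * (\<integral>\<^sup>+ p. ennreal (besov_integrand v v p) \<partial>(\<nu> \<Otimes>\<^sub>M \<nu>))"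
    by (simp add: nn_integral_add nn_integral_cmult)
  also have "\<dots> < \<infinity>" using besov22_integrand_finite[OF assms(1)] besov22_integrand_finite[OF assms(2)]
    by (simp add: ennreal_mult_eq_top_iff less_top[symmetric])
  finally show "(\<integral>\<^sup>+ p. ennreal (besov_integrand (lin_comb a u b v) (lin_comb a u b v) p) \<partial>(\<nu> \<Otimes>\<^sub>M \<nu>)) < \<infinity>" .
qed

lemma besov22_const: "(\<lambda>z. c) \<in> V"
  by (rule besov22I) (simp_all add: besov_integrand_def set_integrable_const)

lemma E2_sym: "u \<in> V \<Longrightarrow> v \<in> V \<Longrightarrow> E2 \<nu> S \<theta> u v = E2 \<nu> S \<theta> v u"
  by (simp add: E2_eq_integral besov_integrand_sym)

lemma E2_lin_comb: assumes "u \<in> V" "v \<in> V" "w \<in> V"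
  shows "E2 \<nu> S \<theta> (lin_comb a u b v) w = a * E2 \<nu> S \<theta> u w + b * E2 \<nu> S \<theta> v w"
  using assms besov22_lin_comb[OF assms(1,2)] integrable_besov_integrand[OF assms(1,3)] integrable_besov_integrand[OF assms(2,3)]
  by (simp add: E2_eq_integral besov_integrand_lin_comb)

lemma E2_nonneg: "u \<in> V \<Longrightarrow> E2 \<nu> S \<theta> u u \<ge> 0"
  by (simp add: E2_eq_integral besov_integrand_square_nonneg)

lemma ennreal_E2_eq: assumes "u \<in> V"
  shows "ennreal (E2 \<nu> S \<theta> u u) = (\<integral>\<^sup>+ p. ennreal (besov_integrand u u p) \<partial>(\<nu> \<Otimes>\<^sub>M \<nu>))"
  using assms by (simp add: E2_eq_integral nn_integral_eq_integral[OF integrable_besov_integrand_square] besov_integrand_square_nonneg)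

text \<open>Null balls with centre in \<open>D\<close> and rational radius form a countable family; every ball
  around a point of \<open>closure D\<close> contains one of them.\<close>

lemma AE_ball_measure_pos: "AE y in \<nu>. \<forall>r>0. emeasure \<nu> (ball y r) > 0"
proof -
  have c: "countable (D \<times> \<rat>)" using countable_D countable_rat by (intro countable_SIGMA) auto
  have "AE y in \<nu>. \<forall>p\<in>D \<times> \<rat>. emeasure \<nu> (ball (fst p) (snd p)) = 0 \<longrightarrow> y \<notin> ball (fst p) (snd p)"
  proof (subst AE_ball_countable[OF c], intro ballI)
    fix p :: "'a \<times> real"
    show "AE y in \<nu>. emeasure \<nu> (ball (fst p) (snd p)) = 0 \<longrightarrow> y \<notin> ball (fst p) (snd p)"
    proof (cases "emeasure \<nu> (ball (fst p) (snd p)) = 0")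
      case True
      have "ball (fst p) (snd p) \<in> null_sets \<nu>" using True by (intro null_setsI) auto
      from AE_not_in[OF this] show ?thesis by simp
    next
      case False
      then show ?thesis by simp
    qed
  qed
  with AE_in_closure_D show ?thesis
  proof eventually_elim
    case (elim y)
    show ?case
    proof (intro allI impI)
      fix r :: real assume r: "r > 0"
      show "emeasure \<nu> (ball y r) > 0"
      proof (rule ccontr)
        assume "\<not> emeasure \<nu> (ball y r) > 0"
        then have z: "emeasure \<nu> (ball y r) = 0" by (simp add: not_gr_zero)
        obtain q where q: "q \<in> D" "dist q y < r/3"
          using elim(1) r closure_approachable[of y D] by (metis divide_pos_pos zero_less_numeral)
        obtain s where s: "s \<in> \<rat>" "r/3 < s" "s < 2*r/3" using Rats_dense_in_real[of "r/3" "2*r/3"] r by auto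
        have sub: "ball q s \<subseteq> ball y r"
        proof
          fix z assume "z \<in> ball q s"
          then have "dist q z < s" by simp
          moreover have "dist y z \<le> dist y q + dist q z" by (rule dist_triangle)
          ultimately show "z \<in> ball y r" using q(2) s by (simp add: dist_commute)
        qed
        have "emeasure \<nu> (ball q s) \<le> emeasure \<nu> (ball y r)" by (rule emeasure_mono[OF sub]) simp
        then have "emeasure \<nu> (ball q s) = 0" using z by simp
        with elim(2) q(1) s(1) have "y \<notin> ball q s" by auto
        moreover have "y \<in> ball q s" using q(2) s(2) by simp
        ultimately show False by simp
      qed
    qed
  qed
qed

lemma measure_S_pos: "measure \<nu> S > 0"
  using nu_S_pos nu_S_finite by (simp add: measure_def enn2real_positive_iff)

lemma measure_le_measure_S: "measure \<nu> A \<le> measure \<nu> S"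
proof -
  have "measure \<nu> A \<le> measure \<nu> UNIV"
    by (metis bounded_measure space_nu)
  also have "measure \<nu> UNIV = measure \<nu> S" using emeasure_UNIV_eq_S by (simp add: measure_def)
  finally show ?thesis .
qed

lemma powr_R_pos: "R powr (2*\<theta>) > 0" using R_pos by simp

text \<open>This is where \<open>\<theta> > 0\<close> and the boundedness of \<open>S\<close> enter.\<close>

lemma besov_kernel_lower_bound:
  assumes y: "y \<in> S" "\<forall>r>0. emeasure \<nu> (ball y r) > 0" and x: "x \<in> S" "x \<in> closure D" "x \<noteq> y"
  shows "besov_kernel y x \<ge> 1 / (R powr (2*\<theta>) * measure \<nu> S)"
proof -
  define d where "d = dist x y"
  have d: "d > 0" "d \<le> R" using x y dist_le_R[of x y] by (auto simp: d_def)
  have p1: "d powr (2*\<theta>) \<le> R powr (2*\<theta>)" using d theta_pos by (intro powr_mono2) auto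
  have p0: "d powr (2*\<theta>) > 0" using d by simp
  have m0: "measure \<nu> (ball y d) > 0"
    using y(2) d(1) by (simp add: measure_def enn2real_positive_iff less_top[symmetric])
  have m1: "measure \<nu> (ball y d) \<le> measure \<nu> S" by (rule measure_le_measure_S)
  have den: "d powr (2*\<theta>) * measure \<nu> (ball y d) \<le> R powr (2*\<theta>) * measure \<nu> S"
    using p0 p1 m0 m1 powr_R_pos by (intro mult_mono) auto
  have "1 / (R powr (2*\<theta>) * measure \<nu> S) \<le> 1 / (d powr (2*\<theta>) * measure \<nu> (ball y d))"
    using den p0 m0 powr_R_pos measure_S_pos by (intro divide_left_mono) auto
  also have "\<dots> = besov_kernel y x" using x y by (simp add: besov_kernel_def d_def)
  finally show ?thesis .
qed

lemma besov_integrand_lower_bound: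
  assumes y: "\<forall>r>0. 0 < emeasure \<nu> (ball y r)" and x: "x \<in> closure D"
  shows "indicator S y * indicator S x * (u y - u x)\<^sup>2 / (R powr (2*\<theta>) * measure \<nu> S) \<le> besov_integrand u u (y, x)"
proof (cases "y \<in> S \<and> x \<in> S \<and> x \<noteq> y")
  case True
  have "1 / (R powr (2*\<theta>) * measure \<nu> S) \<le> besov_kernel y x"
    using True y x by (intro besov_kernel_lower_bound) auto
  then have "1 / (R powr (2*\<theta>) * measure \<nu> S) * (u y - u x)\<^sup>2 \<le> besov_kernel y x * (u y - u x)\<^sup>2"
    by (rule mult_right_mono) simp
  moreover have "besov_integrand u u (y, x) = besov_kernel y x * (u y - u x)\<^sup>2"
    by (simp add: besov_integrand_def power2_eq_square)
  ultimately show ?thesis using True by simp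
next
  case False
  then show ?thesis using besov_integrand_square_nonneg[of u "(y, x)"] by auto
qed

lemma set_integral_square_diff:
  assumes u: "u \<in> V" and mean: "set_lebesgue_integral \<nu> S u = 0"
  shows "set_integrable \<nu> S (\<lambda>x. (u y - u x)\<^sup>2)"
    and "set_lebesgue_integral \<nu> S (\<lambda>x. (u y - u x)\<^sup>2) = measure \<nu> S * (u y)\<^sup>2 + set_lebesgue_integral \<nu> S (\<lambda>x. (u x)\<^sup>2)"
proof -
  have expand: "(\<lambda>x. (u y - u x)\<^sup>2) = (\<lambda>x. (u y)\<^sup>2 + (- 2 * u y) * u x + (u x)\<^sup>2)"
    by (auto simp: power2_eq_square algebra_simps)
  have ints: "set_integrable \<nu> S (\<lambda>x. (u y)\<^sup>2)" "set_integrable \<nu> S u" "set_integrable \<nu> S (\<lambda>x. (u x)\<^sup>2)"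
    using set_integrable_const[of S] besov22_integrable[OF u] besov22_square_integrable[OF u] by auto
  then show "set_integrable \<nu> S (\<lambda>x. (u y - u x)\<^sup>2)"
    unfolding expand by (intro set_integral_add set_integrable_mult_right)
  show "set_lebesgue_integral \<nu> S (\<lambda>x. (u y - u x)\<^sup>2) = measure \<nu> S * (u y)\<^sup>2 + set_lebesgue_integral \<nu> S (\<lambda>x. (u x)\<^sup>2)"
    unfolding expand using ints mean nu_S_finite
    by (simp add: set_integral_add set_integrable_mult_right set_integral_mult_right set_integral_const)
qed

lemma besov22_poincare:
  assumes u: "u \<in> V" and mean: "set_lebesgue_integral \<nu> S u = 0"
  shows "set_lebesgue_integral \<nu> S (\<lambda>x. (u x)\<^sup>2) \<le> R powr (2*\<theta>) * E2 \<nu> S \<theta> u u"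
proof -
  note [measurable] = besov22_measurable[OF u]
  define C where "C = R powr (2*\<theta>) * measure \<nu> S"
  have C: "C > 0" using powr_R_pos measure_S_pos by (simp add: C_def)
  have "ennreal (set_lebesgue_integral \<nu> S (\<lambda>x. (u x)\<^sup>2) / R powr (2*\<theta>)) =
        (\<integral>\<^sup>+ y. ennreal (measure \<nu> S * (indicator S y * (u y)\<^sup>2) / C) \<partial>\<nu>)"
    using besov22_square_integrable[OF u] C measure_S_pos unfolding set_integrable_def
    by (subst nn_integral_eq_integral) (auto simp: set_lebesgue_integral_def C_def)
  also have "\<dots> \<le> (\<integral>\<^sup>+ y. \<integral>\<^sup>+ x. ennreal (indicator S y * indicator S x * (u y - u x)\<^sup>2 / C) \<partial>\<nu> \<partial>\<nu>)"
  proof (rule nn_integral_mono)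
    fix y
    have "0 \<le> set_lebesgue_integral \<nu> S (\<lambda>x. (u x)\<^sup>2)"
      unfolding set_lebesgue_integral_def by (intro integral_nonneg_AE) auto
    then have "measure \<nu> S * (indicator S y * (u y)\<^sup>2) / C \<le>
        indicator S y * set_lebesgue_integral \<nu> S (\<lambda>x. (u y - u x)\<^sup>2) / C"
      using C by (simp add: set_integral_square_diff(2)[OF u mean] divide_right_mono split: split_indicator)
    also have "\<dots> = (\<integral> x. indicator S y * indicator S x * (u y - u x)\<^sup>2 / C \<partial>\<nu>)"
      by (simp add: set_lebesgue_integral_def mult.assoc)
    also have "ennreal \<dots> = (\<integral>\<^sup>+ x. ennreal (indicator S y * indicator S x * (u y - u x)\<^sup>2 / C) \<partial>\<nu>)"
      using set_integral_square_diff(1)[OF u mean, of y] C unfolding set_integrable_def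
      by (subst nn_integral_eq_integral) (auto simp: mult.assoc)
    finally show "ennreal (measure \<nu> S * (indicator S y * (u y)\<^sup>2) / C) \<le> \<dots>"
      by (simp add: ennreal_leI)
  qed
  also have "\<dots> \<le> (\<integral>\<^sup>+ y. \<integral>\<^sup>+ x. ennreal (besov_integrand u u (y, x)) \<partial>\<nu> \<partial>\<nu>)"
  proof (rule nn_integral_mono_AE, rule eventually_mono[OF AE_ball_measure_pos])
    fix y assume "\<forall>r>0. 0 < emeasure \<nu> (ball y r)"
    then show "(\<integral>\<^sup>+ x. ennreal (indicator S y * indicator S x * (u y - u x)\<^sup>2 / C) \<partial>\<nu>)
        \<le> (\<integral>\<^sup>+ x. ennreal (besov_integrand u u (y, x)) \<partial>\<nu>)"
      using AE_in_closure_D unfolding C_def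
      by (intro nn_integral_mono_AE) (auto elim!: eventually_mono intro!: ennreal_leI besov_integrand_lower_bound)
  qed
  also have "\<dots> = ennreal (E2 \<nu> S \<theta> u u)"
    unfolding ennreal_E2_eq[OF u] by (rule sigma_finite_measure.nn_integral_fst[OF sigma_finite_nu]) measurable
  finally show ?thesis
    using E2_nonneg[OF u] powr_R_pos by (simp add: ennreal_le_iff divide_le_eq mult.commute)
qed

lemma E2_cong: "(\<And>y x. u' y - u' x = u y - u x) \<Longrightarrow> (\<And>y x. v' y - v' x = v y - v x) \<Longrightarrow>
    E2 \<nu> S \<theta> u' v' = E2 \<nu> S \<theta> u v"
  unfolding E2_def by simp

lemma mean_zero_shift:
  assumes u: "u \<in> V"
  defines "g \<equiv> lin_comb 1 u (- (set_lebesgue_integral \<nu> S u / measure \<nu> S)) (\<lambda>z. 1)"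
  shows "g \<in> V" "set_lebesgue_integral \<nu> S g = 0"
proof -
  show "g \<in> V" unfolding g_def using u besov22_const by (intro besov22_lin_comb)
  have iu: "set_integrable \<nu> S u" by (rule besov22_integrable[OF u])
  have i1: "set_integrable \<nu> S (\<lambda>x. 1::real)" by (simp add: set_integrable_const)
  define c where "c = set_lebesgue_integral \<nu> S u / measure \<nu> S"
  have iu': "integrable \<nu> (\<lambda>x. indicator S x * u x)" using iu by (simp add: set_integrable_def)
  have iS: "integrable \<nu> (\<lambda>x. c * indicator S x :: real)"
    using i1 by (simp add: set_integrable_def)
  have eq: "(\<lambda>x. indicator S x *\<^sub>R g x) = (\<lambda>x. indicator S x * u x - c * indicator S x)"
    by (auto simp: g_def lin_comb_def c_def fun_eq_iff split: split_indicator)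
  have "set_lebesgue_integral \<nu> S g = (\<integral>x. indicator S x * u x \<partial>\<nu>) - c * measure \<nu> S"
    unfolding set_lebesgue_integral_def eq using iu' iS by simp
  also have "(\<integral>x. indicator S x * u x \<partial>\<nu>) = set_lebesgue_integral \<nu> S u"
    by (simp add: set_lebesgue_integral_def)
  finally show "set_lebesgue_integral \<nu> S g = 0" using measure_S_pos by (simp add: c_def)
qed

lemma AE_convergent_of_fast_L2_cauchy:
  assumes bV: "\<And>j. b j \<in> V"
    and bd: "\<And>j. set_lebesgue_integral \<nu> S (\<lambda>z. (b (Suc j) z - b j z)\<^sup>2) \<le> (1/8)^j"
  shows "AE z in \<nu>. convergent (\<lambda>j. b j z)"
proof -
  have bm[measurable]: "b j \<in> borel_measurable borel" for j using besov22_measurable[OF bV] .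
  define e where "e j z = b (Suc j) z - b j z" for j z
  have em[measurable]: "e j \<in> borel_measurable borel" for j unfolding e_def by measurable
  have int_e: "integrable \<nu> (\<lambda>z. indicator S z * (e j z)\<^sup>2)" for j
  proof -
    have "lin_comb 1 (b (Suc j)) (-1) (b j) \<in> V" using bV by (intro besov22_lin_comb)
    from besov22_square_integrable[OF this] show ?thesis by (simp add: set_integrable_def lin_comb_def e_def)
  qed
  have nn: "(\<integral>\<^sup>+ z. ennreal (2^j * (indicator S z * (e j z)\<^sup>2)) \<partial>\<nu>) \<le> ennreal ((1/4)^j)" for j
  proof -
    have "(\<integral>\<^sup>+ z. ennreal (2^j * (indicator S z * (e j z)\<^sup>2)) \<partial>\<nu>) = ennreal (\<integral> z. 2^j * (indicator S z * (e j z)\<^sup>2) \<partial>\<nu>)"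
      using int_e[of j] by (intro nn_integral_eq_integral) auto
    also have "(\<integral> z. 2^j * (indicator S z * (e j z)\<^sup>2) \<partial>\<nu>) = 2^j * set_lebesgue_integral \<nu> S (\<lambda>z. (b (Suc j) z - b j z)\<^sup>2)"
      by (simp add: set_lebesgue_integral_def e_def)
    also have "\<dots> \<le> 2^j * (1/8)^j" using bd[of j] by (intro mult_left_mono) auto
    also have "(2::real)^j * (1/8)^j = (1/4)^j" by (simp add: power_mult_distrib[symmetric])
    finally show ?thesis using ennreal_leI by blast
  qed
  have "(\<integral>\<^sup>+ z. (\<Sum>j. ennreal (2^j * (indicator S z * (e j z)\<^sup>2))) \<partial>\<nu>) = (\<Sum>j. \<integral>\<^sup>+ z. ennreal (2^j * (indicator S z * (e j z)\<^sup>2)) \<partial>\<nu>)"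
    by (rule nn_integral_suminf) measurable
  also have "\<dots> \<le> (\<Sum>j. ennreal ((1/4)^j))"
    by (intro suminf_le nn summableI)
  also have "\<dots> = ennreal (\<Sum>j. (1/4)^j)"
    by (intro suminf_ennreal2) (auto intro: summable_geometric)
  also have "\<dots> < \<infinity>" by simp
  finally have "(\<integral>\<^sup>+ z. (\<Sum>j. ennreal (2^j * (indicator S z * (e j z)\<^sup>2))) \<partial>\<nu>) \<noteq> \<infinity>" by simp
  then have "AE z in \<nu>. (\<Sum>j. ennreal (2^j * (indicator S z * (e j z)\<^sup>2))) \<noteq> \<infinity>"
    by (intro nn_integral_PInf_AE) measurable
  with AE_in_S show ?thesis
  proof eventually_elim
    case (elim z)
    then have "(\<Sum>j. ennreal (2^j * (e j z)\<^sup>2)) \<noteq> top" by simp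
    then have "summable (\<lambda>j. 2^j * (b (Suc j) z - b j z)\<^sup>2)"
      by (intro summable_suminf_not_top) (auto simp: e_def)
    then show "convergent (\<lambda>j. b j z)" by (rule convergent_of_summable_weighted_increments)
  qed
qed

lemma L2_fatou:
  assumes bm[measurable]: "\<And>j. b j \<in> borel_measurable borel" and wm[measurable]: "w \<in> borel_measurable borel"
    and conv: "AE z in \<nu>. (\<lambda>j. b j z) \<longlonglongrightarrow> w z"
    and bd: "\<And>j. k \<le> j \<Longrightarrow> set_lebesgue_integral \<nu> S (\<lambda>z. (b j z - b k z)\<^sup>2) \<le> \<epsilon>"
    and sqi: "\<And>j. set_integrable \<nu> S (\<lambda>z. (b j z - b k z)\<^sup>2)"
  shows "(\<integral>\<^sup>+ z. ennreal (indicator S z * (w z - b k z)\<^sup>2) \<partial>\<nu>) \<le> ennreal \<epsilon>"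
proof -
  have "(\<integral>\<^sup>+ z. ennreal (indicator S z * (w z - b k z)\<^sup>2) \<partial>\<nu>) \<le>
        (\<integral>\<^sup>+ z. liminf (\<lambda>j. ennreal (indicator S z * (b j z - b k z)\<^sup>2)) \<partial>\<nu>)"
  proof (rule nn_integral_mono_AE)
    show "AE z in \<nu>. ennreal (indicator S z * (w z - b k z)\<^sup>2) \<le> liminf (\<lambda>j. ennreal (indicator S z * (b j z - b k z)\<^sup>2))"
      using conv
    proof eventually_elim
      case (elim z)
      have "(\<lambda>j. ennreal (indicator S z * (b j z - b k z)\<^sup>2)) \<longlonglongrightarrow> ennreal (indicator S z * (w z - b k z)\<^sup>2)"
        by (intro tendsto_ennrealI tendsto_intros elim)
      then have "liminf (\<lambda>j. ennreal (indicator S z * (b j z - b k z)\<^sup>2)) = ennreal (indicator S z * (w z - b k z)\<^sup>2)"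
        by (intro lim_imp_Liminf) auto
      then show ?case by simp
    qed
  qed
  also have "\<dots> \<le> liminf (\<lambda>j. \<integral>\<^sup>+ z. ennreal (indicator S z * (b j z - b k z)\<^sup>2) \<partial>\<nu>)"
    by (rule nn_integral_liminf) measurable
  also have "\<dots> \<le> ennreal \<epsilon>"
  proof (rule Liminf_le)
    show "\<forall>\<^sub>F j in sequentially. (\<integral>\<^sup>+ z. ennreal (indicator S z * (b j z - b k z)\<^sup>2) \<partial>\<nu>) \<le> ennreal \<epsilon>"
      using eventually_ge_at_top[of k]
    proof eventually_elim
      case (elim j)
      have "(\<integral>\<^sup>+ z. ennreal (indicator S z * (b j z - b k z)\<^sup>2) \<partial>\<nu>) =
            ennreal (\<integral> z. indicator S z * (b j z - b k z)\<^sup>2 \<partial>\<nu>)"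
        using sqi[of j] by (intro nn_integral_eq_integral) (auto simp: set_integrable_def)
      also have "\<dots> \<le> ennreal \<epsilon>" using bd[OF elim] by (intro ennreal_leI) (simp add: set_lebesgue_integral_def)
      finally show ?case .
    qed
  qed simp
  finally show ?thesis .
qed

lemma besov_fatou:
  assumes bV: "\<And>j. b j \<in> V" and wm[measurable]: "w \<in> borel_measurable borel"
    and conv: "AE z in \<nu>. (\<lambda>j. b j z) \<longlonglongrightarrow> w z"
    and bd: "\<And>j. k \<le> j \<Longrightarrow> E2 \<nu> S \<theta> (lin_comb 1 (b j) (-1) (b k)) (lin_comb 1 (b j) (-1) (b k)) \<le> \<epsilon>"
  shows "(\<integral>\<^sup>+ p. ennreal (besov_integrand (\<lambda>z. w z - b k z) (\<lambda>z. w z - b k z) p) \<partial>(\<nu> \<Otimes>\<^sub>M \<nu>)) \<le> ennreal \<epsilon>"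
proof -
  have bm[measurable]: "b j \<in> borel_measurable borel" for j using besov22_measurable[OF bV] .
  define G where "G j p = ennreal (besov_integrand (\<lambda>z. b j z - b k z) (\<lambda>z. b j z - b k z) p)" for j p
  define F where "F p = ennreal (besov_integrand (\<lambda>z. w z - b k z) (\<lambda>z. w z - b k z) p)" for p
  have Gm[measurable]: "G j \<in> borel_measurable (\<nu> \<Otimes>\<^sub>M \<nu>)" for j unfolding G_def by measurable
  have Fm[measurable]: "F \<in> borel_measurable (\<nu> \<Otimes>\<^sub>M \<nu>)" unfolding F_def by measurable
  have pt: "F (y, x) = liminf (\<lambda>j. G j (y, x))" if "(\<lambda>j. b j y) \<longlonglongrightarrow> w y" "(\<lambda>j. b j x) \<longlonglongrightarrow> w x" for y x
  proof -
    have "(\<lambda>j. G j (y, x)) \<longlonglongrightarrow> F (y, x)"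
      unfolding G_def F_def besov_integrand_def by (intro tendsto_ennrealI tendsto_intros) (simp_all add: that)
    then show ?thesis by (intro lim_imp_Liminf[symmetric]) auto
  qed
  have "(\<integral>\<^sup>+ p. F p \<partial>(\<nu> \<Otimes>\<^sub>M \<nu>)) = (\<integral>\<^sup>+ y. \<integral>\<^sup>+ x. F (y, x) \<partial>\<nu> \<partial>\<nu>)"
    by (rule sigma_finite_measure.nn_integral_fst[OF sigma_finite_nu, symmetric]) measurable
  also have "\<dots> \<le> (\<integral>\<^sup>+ y. \<integral>\<^sup>+ x. liminf (\<lambda>j. G j (y, x)) \<partial>\<nu> \<partial>\<nu>)"
  proof (rule nn_integral_mono_AE)
    show "AE y in \<nu>. (\<integral>\<^sup>+ x. F (y, x) \<partial>\<nu>) \<le> (\<integral>\<^sup>+ x. liminf (\<lambda>j. G j (y, x)) \<partial>\<nu>)"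
      using conv
    proof eventually_elim
      case (elim y)
      note yc = elim
      show ?case
      proof (rule nn_integral_mono_AE)
        show "AE x in \<nu>. F (y, x) \<le> liminf (\<lambda>j. G j (y, x))"
          using conv by eventually_elim (simp add: pt[OF yc])
      qed
    qed
  qed
  also have "\<dots> = (\<integral>\<^sup>+ p. liminf (\<lambda>j. G j p) \<partial>(\<nu> \<Otimes>\<^sub>M \<nu>))"
    by (rule sigma_finite_measure.nn_integral_fst[OF sigma_finite_nu]) measurable
  also have "\<dots> \<le> liminf (\<lambda>j. \<integral>\<^sup>+ p. G j p \<partial>(\<nu> \<Otimes>\<^sub>M \<nu>))"
    by (rule nn_integral_liminf) measurable
  also have "\<dots> \<le> ennreal \<epsilon>"
  proof (rule Liminf_le)
    show "\<forall>\<^sub>F j in sequentially. (\<integral>\<^sup>+ p. G j p \<partial>(\<nu> \<Otimes>\<^sub>M \<nu>)) \<le> ennreal \<epsilon>"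
      using eventually_ge_at_top[of k]
    proof eventually_elim
      case (elim j)
      have cV: "lin_comb 1 (b j) (-1) (b k) \<in> V" using bV by (intro besov22_lin_comb)
      have eq: "(\<lambda>z. b j z - b k z) = lin_comb 1 (b j) (-1) (b k)" by (simp add: lin_comb_def fun_eq_iff)
      have "(\<integral>\<^sup>+ p. G j p \<partial>(\<nu> \<Otimes>\<^sub>M \<nu>)) = ennreal (E2 \<nu> S \<theta> (lin_comb 1 (b j) (-1) (b k)) (lin_comb 1 (b j) (-1) (b k)))"
        unfolding G_def eq using ennreal_E2_eq[OF cV] by simp
      also have "\<dots> \<le> ennreal \<epsilon>" using bd[OF elim] by (rule ennreal_leI)
      finally show ?case .
    qed
  qed simp
  finally show ?thesis unfolding F_def .
qed

lemma E2_neg_cong: assumes "\<And>y x. u' y - u' x = -(u y - u x)" shows "E2 \<nu> S \<theta> u' u' = E2 \<nu> S \<theta> u u"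
proof -
  have "(u' y - u' x) * (u' y - u' x) = (u y - u x) * (u y - u x)" for y x
    unfolding assms[of y x] by (rule minus_mult_minus)
  then show ?thesis unfolding E2_def by (simp only:)
qed

lemma mean_diff:
  assumes "u \<in> V" "v \<in> V" "set_lebesgue_integral \<nu> S u = 0" "set_lebesgue_integral \<nu> S v = 0"
  shows "set_lebesgue_integral \<nu> S (lin_comb 1 u (-1) v) = 0"
proof -
  have "set_lebesgue_integral \<nu> S (lin_comb 1 u (-1) v) = set_lebesgue_integral \<nu> S (\<lambda>z. u z - v z)"
    by (simp add: lin_comb_def)
  also have "\<dots> = set_lebesgue_integral \<nu> S u - set_lebesgue_integral \<nu> S v"
    using besov22_integrable[OF assms(1)] besov22_integrable[OF assms(2)]
    by (rule set_integral_diff(2))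
  finally show ?thesis using assms by simp
qed

lemma besov22_fatou_limit:
  assumes bV: "\<And>j. b j \<in> V" and wm[measurable]: "w \<in> borel_measurable borel"
    and conv: "AE z in \<nu>. (\<lambda>j. b j z) \<longlonglongrightarrow> w z"
    and L2: "\<And>j. k \<le> j \<Longrightarrow> set_lebesgue_integral \<nu> S (\<lambda>z. (b j z - b k z)\<^sup>2) \<le> \<epsilon>"
    and energy: "\<And>j. k \<le> j \<Longrightarrow> E2 \<nu> S \<theta> (lin_comb 1 (b j) (-1) (b k)) (lin_comb 1 (b j) (-1) (b k)) \<le> \<eta>"
    and "0 \<le> \<eta>"
  shows "(\<lambda>z. w z - b k z) \<in> V" and "E2 \<nu> S \<theta> (\<lambda>z. w z - b k z) (\<lambda>z. w z - b k z) \<le> \<eta>"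
proof -
  have bm[measurable]: "b j \<in> borel_measurable borel" for j using besov22_measurable[OF bV] .
  have L2_limit: "(\<integral>\<^sup>+ z. ennreal (indicator S z * (w z - b k z)\<^sup>2) \<partial>\<nu>) \<le> ennreal \<epsilon>"
  proof (rule L2_fatou[OF bm wm conv L2])
    fix j
    have "lin_comb 1 (b j) (-1) (b k) \<in> V" using bV by (intro besov22_lin_comb)
    from besov22_square_integrable[OF this] show "set_integrable \<nu> S (\<lambda>z. (b j z - b k z)\<^sup>2)"
      by (simp add: lin_comb_def)
  qed
  have energy_limit:
    "(\<integral>\<^sup>+ p. ennreal (besov_integrand (\<lambda>z. w z - b k z) (\<lambda>z. w z - b k z) p) \<partial>(\<nu> \<Otimes>\<^sub>M \<nu>)) \<le> ennreal \<eta>"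
    by (rule besov_fatou[OF bV wm conv energy])
  show V: "(\<lambda>z. w z - b k z) \<in> V"
  proof (rule besov22I)
    show "set_integrable \<nu> S (\<lambda>z. (w z - b k z)\<^sup>2)"
      unfolding set_integrable_def
    proof (rule integrableI_nonneg)
      show "(\<integral>\<^sup>+ z. ennreal (indicator S z *\<^sub>R (w z - b k z)\<^sup>2) \<partial>\<nu>) < \<infinity>"
        using le_less_trans[OF L2_limit ennreal_less_top] by simp
    qed (simp add: measurable_nu_iff, measurable)
    show "(\<integral>\<^sup>+ p. ennreal (besov_integrand (\<lambda>z. w z - b k z) (\<lambda>z. w z - b k z) p) \<partial>(\<nu> \<Otimes>\<^sub>M \<nu>)) < \<infinity>"
      using le_less_trans[OF energy_limit ennreal_less_top] by simp
  qed simp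
  have "ennreal (E2 \<nu> S \<theta> (\<lambda>z. w z - b k z) (\<lambda>z. w z - b k z)) \<le> ennreal \<eta>"
    unfolding ennreal_E2_eq[OF V] by (rule energy_limit)
  then show "E2 \<nu> S \<theta> (\<lambda>z. w z - b k z) (\<lambda>z. w z - b k z) \<le> \<eta>"
    using ennreal_le_iff[OF \<open>0 \<le> \<eta>\<close>] by blast
qed

lemma besov22_limit_of_fast_cauchy:
  assumes bV: "\<And>j. b j \<in> V" and mean: "\<And>j. set_lebesgue_integral \<nu> S (b j) = 0"
    and fast: "\<And>j k. k \<le> j \<Longrightarrow>
      E2 \<nu> S \<theta> (lin_comb 1 (b j) (-1) (b k)) (lin_comb 1 (b j) (-1) (b k)) \<le> (1/8)^k / R powr (2*\<theta>)"
  shows "\<exists>w\<in>V. (\<lambda>j. E2 \<nu> S \<theta> (lin_comb 1 (b j) (-1) w) (lin_comb 1 (b j) (-1) w)) \<longlonglongrightarrow> 0"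
proof -
  define \<delta> where "\<delta> k = (1/8::real)^k / R powr (2*\<theta>)" for k
  have bm[measurable]: "b j \<in> borel_measurable borel" for j using besov22_measurable[OF bV] .
  have L2_fast: "set_lebesgue_integral \<nu> S (\<lambda>z. (b j z - b k z)\<^sup>2) \<le> (1/8)^k" if "k \<le> j" for j k
  proof -
    have cV: "lin_comb 1 (b j) (-1) (b k) \<in> V" using bV by (intro besov22_lin_comb)
    have "set_lebesgue_integral \<nu> S (\<lambda>z. (b j z - b k z)\<^sup>2) = set_lebesgue_integral \<nu> S (\<lambda>z. (lin_comb 1 (b j) (-1) (b k) z)\<^sup>2)"
      by (simp add: lin_comb_def)
    also have "\<dots> \<le> R powr (2*\<theta>) * E2 \<nu> S \<theta> (lin_comb 1 (b j) (-1) (b k)) (lin_comb 1 (b j) (-1) (b k))"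
      by (rule besov22_poincare[OF cV mean_diff[OF bV bV mean mean]])
    also have "\<dots> \<le> (1/8)^k" using fast[OF that] powr_R_pos by (simp add: field_simps)
    finally show ?thesis .
  qed
  have "AE z in \<nu>. convergent (\<lambda>j. b j z)"
    by (rule AE_convergent_of_fast_L2_cauchy[OF bV]) (rule L2_fast, simp)
  define w where "w z = lim (\<lambda>j. b j z)" for z
  have wm[measurable]: "w \<in> borel_measurable borel" unfolding w_def by measurable
  have conv: "AE z in \<nu>. (\<lambda>j. b j z) \<longlonglongrightarrow> w z"
    using \<open>AE z in \<nu>. convergent (\<lambda>j. b j z)\<close> by eventually_elim (simp add: w_def convergent_LIMSEQ_iff)
  define wk where "wk k = (\<lambda>z. w z - b k z)" for k
  have \<delta>_nonneg: "0 \<le> \<delta> k" for k using powr_R_pos by (simp add: \<delta>_def)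
  have wkV: "wk k \<in> V" and wk_small: "E2 \<nu> S \<theta> (wk k) (wk k) \<le> \<delta> k" for k
    unfolding wk_def \<delta>_def using besov22_fatou_limit[OF bV wm conv L2_fast fast] \<delta>_nonneg[unfolded \<delta>_def]
    by blast+
  have "w = lin_comb 1 (wk 0) 1 (b 0)" by (simp add: wk_def lin_comb_def fun_eq_iff)
  then have wV: "w \<in> V" using besov22_lin_comb[OF wkV bV] by simp
  have "\<delta> \<longlonglongrightarrow> 0"
  proof -
    have "(\<lambda>k. (1/8::real)^k / R powr (2*\<theta>)) \<longlonglongrightarrow> 0 / R powr (2*\<theta>)"
      by (intro tendsto_divide LIMSEQ_power_zero tendsto_const) (use powr_R_pos in auto)
    then show ?thesis by (simp add: \<delta>_def[abs_def])
  qed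
  then have "(\<lambda>j. E2 \<nu> S \<theta> (wk j) (wk j)) \<longlonglongrightarrow> 0"
  proof (rule tendsto_sandwich[of "\<lambda>j. 0" _ _ \<delta>, rotated 3])
    show "\<forall>\<^sub>F j in sequentially. 0 \<le> E2 \<nu> S \<theta> (wk j) (wk j)" using E2_nonneg[OF wkV] by simp
    show "\<forall>\<^sub>F j in sequentially. E2 \<nu> S \<theta> (wk j) (wk j) \<le> \<delta> j" using wk_small by simp
  qed simp
  moreover have "E2 \<nu> S \<theta> (lin_comb 1 (b j) (-1) w) (lin_comb 1 (b j) (-1) w) = E2 \<nu> S \<theta> (wk j) (wk j)" for j
    by (rule E2_neg_cong) (simp add: lin_comb_def wk_def)
  ultimately have "(\<lambda>j. E2 \<nu> S \<theta> (lin_comb 1 (b j) (-1) w) (lin_comb 1 (b j) (-1) w)) \<longlonglongrightarrow> 0"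
    by simp
  then show ?thesis using wV by blast
qed

lemma besov22_complete:
  fixes u :: "nat \<Rightarrow> 'a \<Rightarrow> real"
  assumes uV: "\<And>n. u n \<in> V"
    and cauchy: "\<forall>e>0. \<exists>N. \<forall>n\<ge>N. \<forall>m\<ge>N. E2 \<nu> S \<theta> (lin_comb 1 (u n) (-1) (u m)) (lin_comb 1 (u n) (-1) (u m)) < e"
  shows "\<exists>w\<in>V. \<exists>r. strict_mono r \<and>
           (\<lambda>j. E2 \<nu> S \<theta> (lin_comb 1 (u (r j)) (-1) w) (lin_comb 1 (u (r j)) (-1) w)) \<longlonglongrightarrow> 0"
proof -
  have "\<exists>r. strict_mono r \<and> (\<forall>j k. k \<le> j \<longrightarrow>
      E2 \<nu> S \<theta> (lin_comb 1 (u (r j)) (-1) (u (r k))) (lin_comb 1 (u (r j)) (-1) (u (r k))) < (1/8)^k / R powr (2*\<theta>))"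
    by (rule cauchy_fast_subsequence[OF cauchy]) (use powr_R_pos in simp)
  then obtain r where r: "strict_mono r" and fast: "\<And>j k. k \<le> j \<Longrightarrow>
      E2 \<nu> S \<theta> (lin_comb 1 (u (r j)) (-1) (u (r k))) (lin_comb 1 (u (r j)) (-1) (u (r k))) < (1/8)^k / R powr (2*\<theta>)"
    by blast
  define b where "b j = lin_comb 1 (u (r j)) (- (set_lebesgue_integral \<nu> S (u (r j)) / measure \<nu> S)) (\<lambda>z. 1)" for j
  have bV: "b j \<in> V" and mean: "set_lebesgue_integral \<nu> S (b j) = 0" for j
    unfolding b_def by (rule mean_zero_shift[OF uV])+
  have shift: "E2 \<nu> S \<theta> (lin_comb 1 (b j) (-1) v) (lin_comb 1 (b j) (-1) v) =
      E2 \<nu> S \<theta> (lin_comb 1 (u (r j)) (-1) v) (lin_comb 1 (u (r j)) (-1) v)" for j v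
    by (rule E2_cong) (simp_all add: b_def lin_comb_def)
  have "E2 \<nu> S \<theta> (lin_comb 1 (b j) (-1) (b k)) (lin_comb 1 (b j) (-1) (b k)) =
      E2 \<nu> S \<theta> (lin_comb 1 (u (r j)) (-1) (u (r k))) (lin_comb 1 (u (r j)) (-1) (u (r k)))" for j k
    by (rule E2_cong) (simp_all add: b_def lin_comb_def)
  then have "E2 \<nu> S \<theta> (lin_comb 1 (b j) (-1) (b k)) (lin_comb 1 (b j) (-1) (b k)) \<le> (1/8)^k / R powr (2*\<theta>)"
    if "k \<le> j" for j k
    using fast[OF that] by simp
  then have "\<exists>w\<in>V. (\<lambda>j. E2 \<nu> S \<theta> (lin_comb 1 (b j) (-1) w) (lin_comb 1 (b j) (-1) w)) \<longlonglongrightarrow> 0"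
    by (rule besov22_limit_of_fast_cauchy[of b, OF bV mean])
  then obtain w where "w \<in> V" and "(\<lambda>j. E2 \<nu> S \<theta> (lin_comb 1 (b j) (-1) w) (lin_comb 1 (b j) (-1) w)) \<longlonglongrightarrow> 0"
    by blast
  then show ?thesis unfolding shift using r by blast
qed

end

locale besov_rhs = besov_boundary +
  fixes f :: "'a \<Rightarrow> real"
  assumes f_meas[measurable]: "f \<in> borel_measurable borel"
    and f_sq: "set_integrable \<nu> S (\<lambda>x. (f x)\<^sup>2)"
    and f_mean: "set_lebesgue_integral \<nu> S f = 0"
begin

definition "rhs v = set_lebesgue_integral \<nu> S (\<lambda>x. v x * f x)"

lemma rhs_integrable: "v \<in> V \<Longrightarrow> set_integrable \<nu> S (\<lambda>x. v x * f x)"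
  by (rule set_integrable_mult_of_squares) (simp_all add: besov22_def f_sq measurable_nu_iff)

lemma rhs_lin_comb: assumes "u \<in> V" "v \<in> V" shows "rhs (lin_comb a u b v) = a * rhs u + b * rhs v"
proof -
  have "rhs (lin_comb a u b v) = set_lebesgue_integral \<nu> S (\<lambda>x. a * (u x * f x) + b * (v x * f x))"
    unfolding rhs_def lin_comb_def by (simp add: algebra_simps)
  also have "\<dots> = a * rhs u + b * rhs v"
    unfolding rhs_def using rhs_integrable[OF assms(1)] rhs_integrable[OF assms(2)]
    by (simp add: set_integral_add set_integral_mult_right set_integrable_mult_right)
  finally show ?thesis .
qed

lemma rhs_shift_const: assumes "u \<in> V" shows "rhs (lin_comb 1 u c (\<lambda>z. 1)) = rhs u"
proof -
  have "rhs (lin_comb 1 u c (\<lambda>z. 1)) = rhs u + c * rhs (\<lambda>z. 1)"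
    using rhs_lin_comb[OF assms besov22_const] by simp
  also have "rhs (\<lambda>z. 1) = 0" using f_mean by (simp add: rhs_def)
  finally show ?thesis by simp
qed

lemma rhs_bounded: assumes u: "u \<in> V" shows "(rhs u)\<^sup>2 \<le> R powr (2*\<theta>) * set_lebesgue_integral \<nu> S (\<lambda>x. (f x)\<^sup>2) * E2 \<nu> S \<theta> u u"
proof -
  define g where "g = lin_comb 1 u (- (set_lebesgue_integral \<nu> S u / measure \<nu> S)) (\<lambda>z. 1)"
  have gV: "g \<in> V" and gm: "set_lebesgue_integral \<nu> S g = 0"
    using mean_zero_shift[OF u] by (simp_all add: g_def)
  have "rhs u = rhs g" using rhs_shift_const[OF u] by (simp add: g_def)
  have F: "0 \<le> set_lebesgue_integral \<nu> S (\<lambda>x. (f x)\<^sup>2)"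
    unfolding set_lebesgue_integral_def by (intro integral_nonneg_AE) auto
  have "(rhs u)^2 = (rhs g)^2" using \<open>rhs u = rhs g\<close> by simp
  also have "\<dots> \<le> set_lebesgue_integral \<nu> S (\<lambda>x. (g x)\<^sup>2) * set_lebesgue_integral \<nu> S (\<lambda>x. (f x)\<^sup>2)"
    unfolding rhs_def
    using gV by (intro set_integral_cauchy_schwarz) (simp_all add: besov22_def f_sq measurable_nu_iff)
  also have "\<dots> \<le> (R powr (2*\<theta>) * E2 \<nu> S \<theta> g g) * set_lebesgue_integral \<nu> S (\<lambda>x. (f x)\<^sup>2)"
    by (intro mult_right_mono besov22_poincare[OF gV gm] F)
  also have "E2 \<nu> S \<theta> g g = E2 \<nu> S \<theta> u u" by (rule E2_cong) (simp_all add: g_def lin_comb_def)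
  finally show ?thesis by (simp add: algebra_simps)
qed

theorem exists_weak_solution: "\<exists>w\<in>V. \<forall>v\<in>V. E2 \<nu> S \<theta> w v = - rhs v"
proof -
  interpret energy_space V "E2 \<nu> S \<theta>" rhs "R powr (2*\<theta>) * set_lebesgue_integral \<nu> S (\<lambda>x. (f x)\<^sup>2)"
    by unfold_locales (assumption | rule besov22_const besov22_lin_comb E2_sym E2_lin_comb E2_nonneg
        rhs_lin_comb rhs_bounded besov22_complete)+
  show ?thesis by (rule exists_solution)
qed

end

lemma compact_countable_dense:
  fixes K :: "'a::metric_space set"
  assumes K: "compact K"
  shows "\<exists>D. countable D \<and> K \<subseteq> closure D"
proof -
  have "\<exists>C. C \<subseteq> K \<and> finite C \<and> K \<subseteq> (\<Union>c\<in>C. ball c (1 / (real n + 1)))" for n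
  proof -
    have "K \<subseteq> (\<Union>c\<in>K. ball c (1 / (real n + 1)))" by auto
    from compactE_image[OF K _ this] show ?thesis by (metis open_ball)
  qed
  then obtain C where C: "\<And>n. finite (C n)" "\<And>n. K \<subseteq> (\<Union>c\<in>C n. ball c (1 / (real n + 1)))"
    by metis
  have "K \<subseteq> closure (\<Union>n. C n)"
  proof
    fix x assume "x \<in> K"
    show "x \<in> closure (\<Union>n. C n)" unfolding closure_approachable
    proof (intro allI impI)
      fix e :: real assume "e > 0"
      obtain n :: nat where "1 / e < real n" using reals_Archimedean2 by blast
      then have n: "1 / (real n + 1) < e" using \<open>e > 0\<close> by (simp add: field_simps)
      from C(2)[of n] \<open>x \<in> K\<close> obtain c where "c \<in> C n" "dist c x < 1 / (real n + 1)" by auto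
      then have "c \<in> (\<Union>n. C n)" "dist c x < e" using n by auto
      then show "\<exists>y\<in>\<Union>n. C n. dist y x < e" by blast
    qed
  qed
  moreover have "countable (\<Union>n. C n)" using C(1) by (intro countable_UN) (auto intro: countable_finite)
  ultimately show ?thesis by blast
qed

lemma finite_radon_measure_tight:
  fixes \<nu> :: "'a::metric_space measure"
  assumes radon: "radon_measure \<nu>" and finite: "emeasure \<nu> UNIV < \<infinity>" and "0 < e"
  shows "\<exists>K. compact K \<and> measure \<nu> (- K) < e"
proof -
  have sets: "sets \<nu> = sets borel" using radon by (simp add: radon_measure_def)
  have space: "space \<nu> = UNIV" using sets_eq_imp_space_eq[OF sets] by simp
  interpret finite_measure \<nu> using finite space by (intro finite_measureI) simp
  define M where "M = measure \<nu> UNIV"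
  show ?thesis
  proof (cases "M < e")
    case True
    then show ?thesis by (intro exI[of _ "{}"]) (simp add: M_def)
  next
    case False
    have "ennreal (M - e) < emeasure \<nu> UNIV"
      using False \<open>0 < e\<close> by (simp add: emeasure_eq_measure M_def ennreal_less_iff)
    also have "emeasure \<nu> UNIV = (SUP K\<in>{K. compact K \<and> K \<subseteq> UNIV}. emeasure \<nu> K)"
      using radon unfolding radon_measure_def by blast
    finally obtain K where K: "compact K" "ennreal (M - e) < emeasure \<nu> K"
      unfolding less_SUP_iff by auto
    then have "M - e < measure \<nu> K"
      using False by (simp add: emeasure_eq_measure ennreal_less_iff)
    moreover have "measure \<nu> (- K) = M - measure \<nu> K"
      using finite_measure_compl[of K] K(1) sets space
      by (simp add: M_def Compl_eq_Diff_UNIV borel_compact)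
    ultimately show ?thesis using K(1) by auto
  qed
qed

lemma finite_radon_measure_separable_support:
  fixes \<nu> :: "'a::metric_space measure"
  assumes radon: "radon_measure \<nu>" and finite: "emeasure \<nu> UNIV < \<infinity>"
  shows "\<exists>D. countable D \<and> emeasure \<nu> (- closure D) = 0"
proof -
  have sets: "sets \<nu> = sets borel" using radon by (simp add: radon_measure_def)
  have space: "space \<nu> = UNIV" using sets_eq_imp_space_eq[OF sets] by simp
  interpret finite_measure \<nu> using finite space by (intro finite_measureI) simp
  have "\<forall>n::nat. \<exists>K. compact K \<and> measure \<nu> (- K) < 1 / (real n + 1)"
    using finite_radon_measure_tight[OF radon finite] by simp
  then obtain K where K: "\<And>n. compact (K n)" "\<And>n. measure \<nu> (- K n) < 1 / (real n + 1)"
    by metis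
  obtain C where C: "\<And>n. countable (C n)" "\<And>n. K n \<subseteq> closure (C n)"
    using compact_countable_dense[OF K(1)] by metis
  define D where "D = (\<Union>n. C n)"
  have "measure \<nu> (- closure D) \<le> e" if "e > 0" for e
  proof -
    obtain n :: nat where "1 / e < real n" using reals_Archimedean2 by blast
    then have n: "1 / (real n + 1) < e" using \<open>e > 0\<close> by (simp add: field_simps)
    have "K n \<subseteq> closure D" using C(2)[of n] closure_mono[of "C n" D] by (auto simp: D_def)
    then have "measure \<nu> (- closure D) \<le> measure \<nu> (- K n)"
      using K(1) sets by (intro finite_measure_mono) (auto intro!: borel_open compact_imp_closed)
    then show ?thesis using K(2)[of n] n by linarith
  qed
  then have "measure \<nu> (- closure D) = 0"
    by (metis dual_order.antisym field_lbound_gt_zero measure_nonneg not_le)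
  then have "emeasure \<nu> (- closure D) = 0" by (simp add: emeasure_eq_measure)
  moreover have "countable D" using C(1) by (simp add: D_def)
  ultimately show ?thesis by blast
qed

lemma arclength_curve_dist_le:
  assumes "arclength_curve \<gamma> l"
  shows "dist (\<gamma> 0) (\<gamma> l) \<le> l"
proof -
  have l: "0 \<le> l" and length: "curve_length \<gamma> 0 l = ennreal l"
    using assms by (auto simp: arclength_curve_def)
  define p :: "nat \<Rightarrow> real" where "p i = (if i = 0 then 0 else l)" for i
  have "(1::nat, p) \<in> {(n, p). p 0 = 0 \<and> p n = l \<and> (\<forall>i<n. p i \<le> p (Suc i))}"
    using l by (simp add: p_def)
  then have "ennreal (\<Sum>i<1. dist (\<gamma> (p i)) (\<gamma> (p (Suc i)))) \<le> curve_length \<gamma> 0 l"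
    unfolding curve_length_def by (rule SUP_upper2) simp
  then show ?thesis using length l by (simp add: p_def ennreal_le_iff)
qed

lemma john_domain_bounded:
  assumes "john_domain \<Omega>"
  shows "bounded \<Omega>"
proof -
  obtain C x0 where "x0 \<in> \<Omega>" and john: "\<forall>x\<in>\<Omega>. \<exists>l \<gamma>. arclength_curve \<gamma> l \<and> \<gamma> 0 = x \<and> \<gamma> l = x0 \<and>
        \<gamma> ` {0..l} \<subseteq> \<Omega> \<and> (\<forall>t\<in>{0..l}. t \<le> C * infdist (\<gamma> t) (- \<Omega>))"
    using assms unfolding john_domain_def by blast
  have "\<Omega> \<subseteq> cball x0 (C * infdist x0 (- \<Omega>))"
  proof
    fix x assume "x \<in> \<Omega>"
    then obtain l \<gamma> where \<gamma>: "arclength_curve \<gamma> l" "\<gamma> 0 = x" "\<gamma> l = x0"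
      and cigar: "\<forall>t\<in>{0..l}. t \<le> C * infdist (\<gamma> t) (- \<Omega>)" using john by blast
    have "0 \<le> l" using \<gamma>(1) by (simp add: arclength_curve_def)
    have "dist x x0 \<le> l" using arclength_curve_dist_le[OF \<gamma>(1)] \<gamma>(2,3) by simp
    also have "l \<le> C * infdist x0 (- \<Omega>)" using cigar \<open>0 \<le> l\<close> \<gamma>(3) by auto
    finally show "x \<in> cball x0 (C * infdist x0 (- \<Omega>))" by (simp add: dist_commute)
  qed
  then show ?thesis using bounded_cball bounded_subset by blast
qed

theorem mainTheorem11:
  fixes \<mu> \<nu> :: "'a::complete_space measure"
    and \<Omega> :: "'a set" and \<Theta> :: real and f :: "'a \<Rightarrow> real"
  defines "\<theta> \<equiv> 1 - \<Theta> / 2"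
  assumes mu_radon: "radon_measure \<mu>"
    and Omega_open: "open \<Omega>" and Omega_conn: "connected \<Omega>"
    and H0: "john_domain \<Omega>"
    and H1_doubling: "doubling_on \<mu> (closure \<Omega>)"
    and H1_poincare: "poincare2_on \<mu> (closure \<Omega>)"
    and nu_radon: "radon_measure \<nu>"
    and nu_supp: "emeasure \<nu> (- (closure \<Omega> - \<Omega>)) = 0"
    and Theta: "0 < \<Theta>" "\<Theta> < 2"
    and H2: "\<exists>C>0. \<forall>x\<in>closure \<Omega> - \<Omega>. \<forall>r. 0 < r \<and> r < 2 * diameter (closure \<Omega> - \<Omega>) \<longrightarrow>
               emeasure \<mu> (ball x r \<inter> \<Omega>) * ennreal (r powr (-\<Theta>)) / ennreal C \<le> emeasure \<nu> (ball x r) \<and>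
               emeasure \<nu> (ball x r) \<le> ennreal C * emeasure \<mu> (ball x r \<inter> \<Omega>) * ennreal (r powr (-\<Theta>))"
    and nu_pos_fin: "0 < emeasure \<nu> (closure \<Omega> - \<Omega>)" "emeasure \<nu> (closure \<Omega> - \<Omega>) < \<infinity>"
    and f_meas: "f \<in> borel_measurable \<nu>"
    and f_L2: "set_integrable \<nu> (closure \<Omega> - \<Omega>) (\<lambda>x. (f x)\<^sup>2)"
    and f_mean: "(\<integral> x\<in>closure \<Omega> - \<Omega>. f x \<partial>\<nu>) = 0"
  shows "\<exists>w\<in>besov22 \<nu> (closure \<Omega> - \<Omega>) \<theta>.
           \<forall>v\<in>besov22 \<nu> (closure \<Omega> - \<Omega>) \<theta>.
             E2 \<nu> (closure \<Omega> - \<Omega>) \<theta> w v = - (\<integral> x\<in>closure \<Omega> - \<Omega>. v x * f x \<partial>\<nu>)"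
proof -
  let ?S = "closure \<Omega> - \<Omega>" and ?R = "diameter (closure \<Omega>) + 1"
  have sets: "sets \<nu> = sets borel" using nu_radon by (simp add: radon_measure_def)
  have S_borel: "?S \<in> sets borel" using Omega_open by (intro borel_closed closed_Diff) auto
  have "emeasure \<nu> UNIV = emeasure \<nu> ?S + emeasure \<nu> (- ?S)"
    using S_borel sets_eq_imp_space_eq[OF sets] by (subst plus_emeasure) (auto simp: sets Compl_eq_Diff_UNIV)
  then obtain D where D: "countable D" "emeasure \<nu> (- closure D) = 0"
    using finite_radon_measure_separable_support[OF nu_radon] nu_supp nu_pos_fin(2) by auto
  have bounded: "bounded (closure \<Omega>)" using john_domain_bounded[OF H0] by blast
  interpret besov_rhs \<nu> ?S \<theta> D ?R f
  proof unfold_locales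
    show "dist x y \<le> ?R" if "x \<in> ?S" "y \<in> ?S" for x y
      using diameter_bounded_bound[OF bounded, of x y] that by auto
    show "0 < ?R" using diameter_ge_0[OF bounded] by linarith
    show "f \<in> borel_measurable borel"
      using f_meas sets_eq_imp_space_eq[OF sets] by (simp add: measurable_def sets)
  qed (use sets S_borel D nu_supp nu_pos_fin Theta f_L2 f_mean in \<open>simp_all add: \<theta>_def\<close>)
  show ?thesis using exists_weak_solution by (simp add: rhs_def)
qed

end
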